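(* Let $A,B$ be finite-dimensional systems, $\{|j\rangle\}_{j=0}^{|A|-1}$ an orthonormal basis of $A$, $U_0,\dots,U_{|A|-1}$ unitaries on $B$, and $\mathcal C_U(X)=C_UXC_U^\dagger$ with $C_U=\sum_j|j\rangle\langle j|_A\otimes U_j$, viewed as a bipartite channel $AB\to AB$. Then \[ S_\infty[A|B]_{\mathcal C_U}\ge-2\log|A|, \] with equality when the vectors $\{|U_j\rangle\!\rangle\}_j$ are mutually orthogonal, i.e., $\operatorname{tr}(U_i^\dagger U_j)=0$ for all $i\ne j$.
   Context: $\log$ base 2; $\mathrm{St}(X)$ density operators; $\mathrm{Ch}(X',X)$ quantum channels. $|U\rangle\!\rangle:=\sum_i(\mathbb 1\otimes U)|ii\rangle$ denotes vectorization. For a bipartite channel $\mathcal N$ from $A'B'$ to $AB$ (here $A'=A$, $B'=B$): $\mathcal R^{\mathbb 1}_{A'\to A}(X):=\operatorname{tr}(X)\mathbb 1_A$; $D_\infty(\rho\|\sigma):=\log\inf\{\lambda:\rho\le\lambda\sigma\}$; for a channel $\mathcal M$ and CP map $\mathcal M'$, $D_\infty[\mathcal M\|\mathcal M']:=\sup_{\rho\in\mathrm{St}(RX')}D_\infty((\mathrm{id}\otimes\mathcal M)(\rho)\|(\mathrm{id}\otimes\mathcal M')(\rho))$; conditional channel min-entropy $S_\infty[A|B]_{\mathcal N}:=-\inf_{\mathcal Q\in\mathrm{Ch}(B',B)}D_\infty[\mathcal N\|\mathcal R^{\mathbb 1}_{A'\to A}\otimes\mathcal Q]$. *)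

theory Defs
  imports "Jordan_Normal_Form.Matrix" "Jordan_Normal_Form.Conjugate" "HOL-Library.Extended_Real"
begin

text \<open>Finite-dimensional quantum systems are modelled by their dimension d;
operators are complex d x d matrices. Composite systems use the Kronecker
product with the usual ordering (first factor = most significant index).\<close>

definition mtrace :: "complex mat \<Rightarrow> complex" where
  "mtrace A = (\<Sum>i<dim_row A. A $$ (i,i))"

definition adj :: "complex mat \<Rightarrow> complex mat" where
  "adj A = transpose_mat (map_mat cnj A)"

definition kron :: "complex mat \<Rightarrow> complex mat \<Rightarrow> complex mat" where
  "kron A B = mat (dim_row A * dim_row B) (dim_col A * dim_col B)
     (\<lambda>(i,j). A $$ (i div dim_row B, j div dim_col B) * B $$ (i mod dim_row B, j mod dim_col B))"

definition msum :: "nat \<Rightarrow> nat \<Rightarrow> ('i \<Rightarrow> complex mat) \<Rightarrow> 'i set \<Rightarrow> complex mat" where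
  "msum n m f S = mat n m (\<lambda>ij. \<Sum>s\<in>S. f s $$ ij)"

definition psd :: "nat \<Rightarrow> complex mat \<Rightarrow> bool" where
  "psd n X \<longleftrightarrow> X \<in> carrier_mat n n \<and> adj X = X \<and>
     (\<forall>v \<in> carrier_vec n. Im ((X *\<^sub>v v) \<bullet>c v) = 0 \<and> 0 \<le> Re ((X *\<^sub>v v) \<bullet>c v))"

definition density :: "nat \<Rightarrow> complex mat \<Rightarrow> bool" where
  "density n \<rho> \<longleftrightarrow> psd n \<rho> \<and> mtrace \<rho> = 1"

definition eunit :: "nat \<Rightarrow> nat \<Rightarrow> nat \<Rightarrow> complex mat" where
  "eunit d a a' = mat d d (\<lambda>(i,j). if i = a \<and> j = a' then 1 else 0)"

definition block :: "nat \<Rightarrow> complex mat \<Rightarrow> nat \<Rightarrow> nat \<Rightarrow> complex mat" where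
  "block dB X a a' = mat dB dB (\<lambda>(i,j). X $$ (a * dB + i, a' * dB + j))"

text \<open>Tensor product of linear maps Phi (on dA x dA) and Psi (on dB x dB), both
dimension preserving, acting on dA*dB x dA*dB matrices, defined by linear
extension: (Phi (x) Psi)(X) = sum_{a,a'} Phi(|a><a'|) (x) Psi(X_{aa'}).\<close>
definition map_tensor :: "(complex mat \<Rightarrow> complex mat) \<Rightarrow> (complex mat \<Rightarrow> complex mat)
    \<Rightarrow> nat \<Rightarrow> nat \<Rightarrow> complex mat \<Rightarrow> complex mat" where
  "map_tensor \<Phi> \<Psi> dA dB X = msum (dA * dB) (dA * dB)
     (\<lambda>(a,a'). kron (\<Phi> (eunit dA a a')) (\<Psi> (block dB X a a'))) ({..<dA} \<times> {..<dA})"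

definition lin_map :: "nat \<Rightarrow> (complex mat \<Rightarrow> complex mat) \<Rightarrow> bool" where
  "lin_map d \<Phi> \<longleftrightarrow> (\<forall>X \<in> carrier_mat d d. \<Phi> X \<in> carrier_mat d d) \<and>
     (\<forall>X \<in> carrier_mat d d. \<forall>Y \<in> carrier_mat d d. \<Phi> (X + Y) = \<Phi> X + \<Phi> Y) \<and>
     (\<forall>X \<in> carrier_mat d d. \<forall>c. \<Phi> (c \<cdot>\<^sub>m X) = c \<cdot>\<^sub>m \<Phi> X)"

definition channel :: "nat \<Rightarrow> (complex mat \<Rightarrow> complex mat) \<Rightarrow> bool" where
  "channel d \<Phi> \<longleftrightarrow> lin_map d \<Phi> \<and>
     (\<forall>X \<in> carrier_mat d d. mtrace (\<Phi> X) = mtrace X) \<and>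
     (\<forall>r X. psd (r * d) X \<longrightarrow> psd (r * d) (map_tensor (\<lambda>Y. Y) \<Phi> r d X))"

definition Dmax :: "nat \<Rightarrow> complex mat \<Rightarrow> complex mat \<Rightarrow> ereal" where
  "Dmax n \<rho> \<sigma> = (let L = {l::real. psd n (l \<cdot>\<^sub>m \<sigma> - \<rho>)} in
     if L = {} then \<infinity> else ereal (log 2 (Inf L)))"

definition Dmax_ch :: "nat \<Rightarrow> (complex mat \<Rightarrow> complex mat) \<Rightarrow> (complex mat \<Rightarrow> complex mat) \<Rightarrow> ereal" where
  "Dmax_ch d M M' = (SUP p \<in> {(r, \<rho>). density (r * d) \<rho>}.
      Dmax (fst p * d) (map_tensor (\<lambda>Y. Y) M (fst p) d (snd p))
                       (map_tensor (\<lambda>Y. Y) M' (fst p) d (snd p)))"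

definition repl_id :: "nat \<Rightarrow> complex mat \<Rightarrow> complex mat" where
  "repl_id dA X = mtrace X \<cdot>\<^sub>m 1\<^sub>m dA"

definition cond_min_entropy :: "nat \<Rightarrow> nat \<Rightarrow> (complex mat \<Rightarrow> complex mat) \<Rightarrow> ereal" where
  "cond_min_entropy dA dB N =
     - (INF Q \<in> {Q. channel dB Q}. Dmax_ch (dA * dB) N (map_tensor (repl_id dA) Q dA dB))"

definition unitary :: "nat \<Rightarrow> complex mat \<Rightarrow> bool" where
  "unitary d U \<longleftrightarrow> U \<in> carrier_mat d d \<and> adj U * U = 1\<^sub>m d \<and> U * adj U = 1\<^sub>m d"

definition outer :: "complex vec \<Rightarrow> complex vec \<Rightarrow> complex mat" where
  "outer v w = mat (dim_vec v) (dim_vec w) (\<lambda>(i,j). v $ i * cnj (w $ j))"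

definition ctrl_unitary :: "nat \<Rightarrow> nat \<Rightarrow> (nat \<Rightarrow> complex vec) \<Rightarrow> (nat \<Rightarrow> complex mat) \<Rightarrow> complex mat" where
  "ctrl_unitary dA dB b U = msum (dA * dB) (dA * dB) (\<lambda>j. kron (outer (b j) (b j)) (U j)) {..<dA}"

definition ctrl_channel :: "nat \<Rightarrow> nat \<Rightarrow> (nat \<Rightarrow> complex vec) \<Rightarrow> (nat \<Rightarrow> complex mat) \<Rightarrow> complex mat \<Rightarrow> complex mat" where
  "ctrl_channel dA dB b U X = ctrl_unitary dA dB b U * X * adj (ctrl_unitary dA dB b U)"

end

theory Submission
  imports Defs "Jordan_Normal_Form.Determinant"
begin

(* Writing b j c for the c-th entry of b j,
     C_U = \<Sum>c e j. b j c * cnj (b j e) * (|c\<rangle>\<langle>e| \<otimes> U j),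
   and the operators |c\<rangle>\<langle>e| \<otimes> U j, each with weight 1/dA, are Kraus operators of R\<^sup>1 \<otimes> Q for
   the mixture Q Y = (1/dA) \<Sum>j. U j * Y * adj (U j). The coefficients have total squared modulus dA,
   so by Cauchy-Schwarz (id \<otimes> C_U) \<rho> (id \<otimes> C_U)\<^sup>\<dagger> \<le> dA\<^sup>2 (id \<otimes> R\<^sup>1 \<otimes> Q) \<rho> for every state \<rho>,
   i.e. D\<^sub>\<infinity> \<le> 2 log dA.

   Feed the maximally entangled state \<Phi> of (A B)(A B) and test with |C_U\<rangle>\<rangle>.
   Against (id \<otimes> C_U) \<Phi> the overlap is dA dB. Against (id \<otimes> R\<^sup>1 \<otimes> Q) \<Phi> for an arbitrary channel
   Q with Choi matrix J it is (dA dB)\<^sup>-\<^sup>1 \<Sum>j \<langle>U j|J|U j\<rangle>; if the |U j\<rangle>\<rangle> are orthogonal, each of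
   squared norm dB, this is at most (dA dB)\<^sup>-\<^sup>1 dB tr J = dB / dA. Hence no multiple below dA\<^sup>2 of
   the second operator dominates the first. *)


section \<open>Finite sums and index arithmetic\<close>

lemma sum_swap_pairs:
  "(\<Sum>a\<in>A. \<Sum>b\<in>B. \<Sum>c\<in>C. \<Sum>d\<in>D. f a b c d) = (\<Sum>c\<in>C. \<Sum>d\<in>D. \<Sum>a\<in>A. \<Sum>b\<in>B. f a b c d)"
proof -
  have "(\<Sum>a\<in>A. \<Sum>b\<in>B. \<Sum>c\<in>C. \<Sum>d\<in>D. f a b c d) = (\<Sum>a\<in>A. \<Sum>c\<in>C. \<Sum>b\<in>B. \<Sum>d\<in>D. f a b c d)"
    by (rule sum.cong[OF refl], rule sum.swap)
  also have "\<dots> = (\<Sum>c\<in>C. \<Sum>a\<in>A. \<Sum>d\<in>D. \<Sum>b\<in>B. f a b c d)"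
    by (subst sum.swap) (rule sum.cong[OF refl], rule sum.cong[OF refl], rule sum.swap)
  also have "\<dots> = (\<Sum>c\<in>C. \<Sum>d\<in>D. \<Sum>a\<in>A. \<Sum>b\<in>B. f a b c d)"
    by (rule sum.cong[OF refl], rule sum.swap)
  finally show ?thesis .
qed

lemma sum_if_eq_pair:
  assumes "finite A" "finite B" "a \<in> A" "b \<in> B"
  shows "(\<Sum>x\<in>A. \<Sum>y\<in>B. if x = a \<and> y = b then f x y else 0) = f a b"
proof -
  have "(\<Sum>x\<in>A. \<Sum>y\<in>B. if x = a \<and> y = b then f x y else 0) = (\<Sum>x\<in>A. if x = a then f x b else 0)"
  proof (rule sum.cong[OF refl])
    fix x show "(\<Sum>y\<in>B. if x = a \<and> y = b then f x y else 0) = (if x = a then f x b else 0)"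
      using assms by (cases "x = a") simp_all
  qed
  then show ?thesis using assms by simp
qed

lemma mult_add_div_mod [simp]:
  "x < d \<Longrightarrow> (a * d + x) div d = (a::nat)" "x < d \<Longrightarrow> (a * d + x) mod d = x"
  by simp_all

lemma nat_eq_iff_div_mod_eq: "(s::nat) = t \<longleftrightarrow> s div d = t div d \<and> s mod d = t mod d"
  by (metis div_mult_mod_eq)

lemma mult_add_eq_iff: "s < d \<Longrightarrow> x < d \<Longrightarrow> e * d + s = g * d + x \<longleftrightarrow> e = g \<and> s = (x::nat)"
  using nat_eq_iff_div_mod_eq[of "e * d + s" "g * d + x" d] by simp

lemma sum_lessThan_mult:
  fixes f :: "nat \<Rightarrow> 'a::comm_monoid_add"
  shows "(\<Sum>i<m * n. f i) = (\<Sum>a<m. \<Sum>x<n. f (a * n + x))"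
proof -
  have "(\<Sum>x<n. f (a * n + x)) = sum f {a * n..<a * n + n}" for a
    using sum.shift_bounds_nat_ivl[of f 0 "a * n" n] by (simp add: add.commute atLeast0LessThan)
  then show ?thesis by (simp add: sum.nat_group)
qed

lemma mult_add_less_mult:
  assumes "c < m" "x < n"
  shows "c * n + x < m * (n::nat)"
proof -
  have "c * n + x < (c + 1) * n" using assms(2) by simp
  also have "\<dots> \<le> m * n" using assms(1) by (intro mult_right_mono) auto
  finally show ?thesis .
qed

lemma sum_lessThan_mult_div_eq:
  fixes g :: "nat \<Rightarrow> 'a::comm_monoid_add"
  assumes "a < r"
  shows "(\<Sum>k<r * d. if k div d = a then g k else 0) = (\<Sum>x<d. g (a * d + x))"
proof -
  have "(\<Sum>k<r * d. if k div d = a then g k else 0)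
      = (\<Sum>a'<r. \<Sum>x<d. if (a' * d + x) div d = a then g (a' * d + x) else 0)"
    by (rule sum_lessThan_mult)
  also have "\<dots> = (\<Sum>a'<r. if a' = a then (\<Sum>x<d. g (a' * d + x)) else 0)"
    by (intro sum.cong refl) (auto intro!: sum.neutral)
  finally show ?thesis using assms by simp
qed

section \<open>Quadratic forms\<close>

definition qform :: "'i set \<Rightarrow> ('i \<Rightarrow> 'i \<Rightarrow> complex) \<Rightarrow> ('i \<Rightarrow> complex) \<Rightarrow> complex" where
  "qform I F v = (\<Sum>i\<in>I. \<Sum>j\<in>I. cnj (v i) * F i j * v j)"

definition psd_form :: "'i set \<Rightarrow> ('i \<Rightarrow> 'i \<Rightarrow> complex) \<Rightarrow> bool" where
  "psd_form I F \<longleftrightarrow> (\<forall>v. 0 \<le> qform I F v)"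

definition entries :: "'a mat \<Rightarrow> nat \<Rightarrow> nat \<Rightarrow> 'a" where
  "entries X i j = X $$ (i, j)"

definition sandwich :: "'j set \<Rightarrow> ('i \<Rightarrow> 'j \<Rightarrow> complex) \<Rightarrow> ('j \<Rightarrow> 'j \<Rightarrow> complex) \<Rightarrow> 'i \<Rightarrow> 'i \<Rightarrow> complex" where
  "sandwich J K F i i' = (\<Sum>j\<in>J. \<Sum>j'\<in>J. K i j * F j j' * cnj (K i' j'))"

definition adj_apply :: "'i set \<Rightarrow> ('i \<Rightarrow> 'j \<Rightarrow> complex) \<Rightarrow> ('i \<Rightarrow> complex) \<Rightarrow> 'j \<Rightarrow> complex" where
  "adj_apply I K v j = (\<Sum>i\<in>I. cnj (K i j) * v i)"

definition gram :: "'i set \<Rightarrow> ('i \<Rightarrow> 'i \<Rightarrow> complex) \<Rightarrow> ('k \<Rightarrow> 'i \<Rightarrow> complex) \<Rightarrow> 'k \<Rightarrow> 'k \<Rightarrow> complex" where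
  "gram I G w k l = (\<Sum>i\<in>I. \<Sum>j\<in>I. cnj (w k i) * G i j * w l j)"

lemma qform_cong: "(\<And>i. i \<in> I \<Longrightarrow> v i = w i) \<Longrightarrow> qform I F v = qform I F w"
  unfolding qform_def by (intro sum.cong refl) auto

lemma qform_cong_form: "(\<And>i j. i \<in> I \<Longrightarrow> j \<in> I \<Longrightarrow> F i j = G i j) \<Longrightarrow> qform I F v = qform I G v"
  unfolding qform_def by (intro sum.cong refl) auto

lemma qform_sum: "qform I (\<lambda>i j. \<Sum>k\<in>S. F k i j) v = (\<Sum>k\<in>S. qform I (F k) v)"
proof -
  have "qform I (\<lambda>i j. \<Sum>k\<in>S. F k i j) v = (\<Sum>i\<in>I. \<Sum>j\<in>I. \<Sum>k\<in>S. cnj (v i) * F k i j * v j)"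
    unfolding qform_def by (simp add: sum_distrib_left sum_distrib_right)
  also have "\<dots> = (\<Sum>k\<in>S. qform I (F k) v)"
    unfolding qform_def by (subst sum.swap) (simp only: sum.swap[of _ I S])
  finally show ?thesis .
qed

lemma qform_scale: "qform I (\<lambda>i j. c * F i j) v = c * qform I F v"
  unfolding qform_def by (simp add: sum_distrib_left mult_ac)

lemma qform_diff: "qform I (\<lambda>i j. F i j - G i j) v = qform I F v - qform I G v"
  unfolding qform_def by (simp add: algebra_simps sum_subtractf)

lemma sum_qform: "(\<Sum>x\<in>X. qform I F (f x)) = (\<Sum>y\<in>I. \<Sum>z\<in>I. F y z * (\<Sum>x\<in>X. cnj (f x y) * f x z))"
proof -
  have "(\<Sum>x\<in>X. qform I F (f x)) = (\<Sum>y\<in>I. \<Sum>x\<in>X. \<Sum>z\<in>I. F y z * (cnj (f x y) * f x z))"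
    unfolding qform_def by (subst sum.swap) (simp add: mult_ac)
  also have "\<dots> = (\<Sum>y\<in>I. \<Sum>z\<in>I. F y z * (\<Sum>x\<in>X. cnj (f x y) * f x z))"
    by (rule sum.cong[OF refl], subst sum.swap) (simp add: sum_distrib_left)
  finally show ?thesis .
qed

lemma qform_sandwich: "qform I (sandwich J K F) v = qform J F (adj_apply I K v)"
proof -
  have "qform I (sandwich J K F) v
      = (\<Sum>i\<in>I. \<Sum>i'\<in>I. \<Sum>j\<in>J. \<Sum>j'\<in>J. cnj (v i) * K i j * F j j' * cnj (K i' j') * v i')"
    unfolding qform_def sandwich_def by (simp add: sum_distrib_left sum_distrib_right mult_ac)
  also have "\<dots> = (\<Sum>j\<in>J. \<Sum>j'\<in>J. \<Sum>i\<in>I. \<Sum>i'\<in>I. cnj (v i) * K i j * F j j' * cnj (K i' j') * v i')"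
    by (rule sum_swap_pairs)
  also have "\<dots> = qform J F (adj_apply I K v)"
    unfolding qform_def adj_apply_def by (simp add: cnj_sum sum_distrib_left sum_distrib_right mult_ac)
  finally show ?thesis .
qed

lemma adj_apply_lincomb:
  "adj_apply I (\<lambda>i j. \<Sum>t\<in>T. g t * K t i j) v j = (\<Sum>t\<in>T. cnj (g t) * adj_apply I (K t) v j)"
  unfolding adj_apply_def by (simp add: cnj_sum sum_distrib_left sum_distrib_right sum.swap[of _ I] mult_ac)

lemma qform_reindex:
  assumes "bij_betw f A I"
  shows "qform I F v = qform A (\<lambda>a b. F (f a) (f b)) (\<lambda>a. v (f a))"
  unfolding qform_def sum.reindex_bij_betw[OF assms, symmetric] ..

lemma qform_block_diagonal:
  assumes "finite P"
  shows "qform (P \<times> K) (\<lambda>(p, k) (p', k'). if p = p' then G k k' else 0) v = (\<Sum>p\<in>P. qform K G (\<lambda>k. v (p, k)))"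
proof -
  have "qform (P \<times> K) (\<lambda>(p, k) (p', k'). if p = p' then G k k' else 0) v
      = (\<Sum>p\<in>P. \<Sum>k\<in>K. \<Sum>p'\<in>P. \<Sum>k'\<in>K. cnj (v (p, k)) * (if p = p' then G k k' else 0) * v (p', k'))"
    unfolding qform_def sum.cartesian_product' by simp
  also have "\<dots> = (\<Sum>p\<in>P. \<Sum>k\<in>K. \<Sum>p'\<in>P. if p = p' then (\<Sum>k'\<in>K. cnj (v (p, k)) * G k k' * v (p', k')) else 0)"
    by (intro sum.cong refl) auto
  also have "\<dots> = (\<Sum>p\<in>P. qform K G (\<lambda>k. v (p, k)))"
    using assms unfolding qform_def by simp
  finally show ?thesis .
qed

lemma qform_restrict:
  assumes "finite I" "T \<subseteq> I" "\<And>i. i \<in> I - T \<Longrightarrow> v i = 0"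
  shows "qform I F v = qform T F v"
  unfolding qform_def using assms
  by (intro sum.mono_neutral_cong_right) (auto intro!: sum.mono_neutral_cong_right)

lemma qform_two_points:
  assumes "finite I" "i \<in> I" "j \<in> I" "i \<noteq> j"
  shows "qform I F (\<lambda>k. if k = i then x else if k = j then y else 0)
    = cnj x * F i i * x + cnj x * F i j * y + cnj y * F j i * x + cnj y * F j j * y"
  using assms by (subst qform_restrict[where T = "{i, j}"]) (auto simp: qform_def)

text \<open>Polarization with the vectors e i + e j and e i + \<i> e j: over the complex numbers a real
  quadratic form is Hermitian, so positivity of the form alone characterises psd.\<close>

lemma psd_form_hermitian:
  assumes "finite I" "psd_form I F" "i \<in> I" "j \<in> I"
  shows "F i j = cnj (F j i)"
proof -
  have real_form: "Im (qform I F v) = 0" for v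
    using assms(2) unfolding psd_form_def by (auto simp: less_eq_complex_def)
  have diag: "Im (F k k) = 0" if "k \<in> I" for k
    using real_form[of "\<lambda>l. if l = k then 1 else 0"] that assms(1)
    by (subst (asm) qform_restrict[where T = "{k}"]) (auto simp: qform_def)
  show ?thesis
  proof (cases "i = j")
    case True
    then show ?thesis using diag[OF assms(3)] by (simp add: complex_eq_iff)
  next
    case False
    have "Im (F i j + F j i) = 0"
      using real_form[of "\<lambda>k. if k = i then 1 else if k = j then 1 else 0"] diag assms False
      by (simp add: qform_two_points)
    moreover have "Re (F i j - F j i) = 0"
      using real_form[of "\<lambda>k. if k = i then 1 else if k = j then \<i> else 0"] diag assms False
      by (simp add: qform_two_points)
    ultimately show ?thesis by (simp add: complex_eq_iff)
  qed
qed

lemma adj_carrier: "A \<in> carrier_mat n m \<Longrightarrow> adj A \<in> carrier_mat m n"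
  unfolding adj_def by auto

lemma adj_dims [simp]: "dim_row (adj A) = dim_col A" "dim_col (adj A) = dim_row A"
  unfolding adj_def by auto

lemma adj_index [simp]: "i < dim_col A \<Longrightarrow> j < dim_row A \<Longrightarrow> adj A $$ (i, j) = cnj (A $$ (j, i))"
  unfolding adj_def by auto

lemma mult_vec_cscalar_prod_qform:
  assumes "X \<in> carrier_mat n n" "v \<in> carrier_vec n"
  shows "(X *\<^sub>v v) \<bullet>c v = qform {..<n} (entries X) (\<lambda>i. v $ i)"
proof -
  have "(X *\<^sub>v v) \<bullet>c v = (\<Sum>i<n. (\<Sum>j<n. X $$ (i, j) * v $ j) * cnj (v $ i))"
    using assms by (simp add: scalar_prod_def atLeast0LessThan row_def)
  then show ?thesis
    unfolding qform_def entries_def by (simp add: sum_distrib_left sum_distrib_right mult_ac)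
qed

lemma psd_iff_psd_form: "psd n X \<longleftrightarrow> X \<in> carrier_mat n n \<and> psd_form {..<n} (entries X)"
proof
  assume psd: "psd n X"
  then have X: "X \<in> carrier_mat n n" by (simp add: psd_def)
  have "0 \<le> qform {..<n} (entries X) v" for v
  proof -
    have "0 \<le> (X *\<^sub>v vec n v) \<bullet>c vec n v"
      using psd by (simp add: psd_def less_eq_complex_def)
    also have "\<dots> = qform {..<n} (entries X) v"
      using X by (simp add: mult_vec_cscalar_prod_qform) (rule qform_cong, simp)
    finally show ?thesis .
  qed
  then show "X \<in> carrier_mat n n \<and> psd_form {..<n} (entries X)"
    using X by (simp add: psd_form_def)
next
  assume "X \<in> carrier_mat n n \<and> psd_form {..<n} (entries X)"
  then have X: "X \<in> carrier_mat n n" and form: "psd_form {..<n} (entries X)" by auto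
  have "adj X = X"
  proof (rule eq_matI)
    fix i j assume "i < dim_row X" "j < dim_col X"
    then show "adj X $$ (i, j) = X $$ (i, j)"
      using X psd_form_hermitian[OF _ form, of i j] by (simp add: entries_def)
  qed (use X in auto)
  moreover have "0 \<le> (X *\<^sub>v v) \<bullet>c v" if "v \<in> carrier_vec n" for v
    using form X that by (simp add: psd_form_def mult_vec_cscalar_prod_qform)
  ultimately show "psd n X"
    using X unfolding psd_def by (auto simp: less_eq_complex_def)
qed

lemma psd_index_nonneg:
  assumes "psd n X" "i < n"
  shows "0 \<le> X $$ (i, i)"
proof -
  have "0 \<le> qform {..<n} (entries X) (\<lambda>j. if j = i then 1 else 0)"
    using assms(1) by (simp add: psd_iff_psd_form psd_form_def)
  also have "\<dots> = X $$ (i, i)"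
    using assms(2) by (subst qform_restrict[where T = "{i}"]) (auto simp: qform_def entries_def)
  finally show ?thesis .
qed

lemma psd_mtrace_nonneg: "psd n X \<Longrightarrow> 0 \<le> mtrace X"
  unfolding mtrace_def by (auto simp: psd_def intro!: sum_nonneg psd_index_nonneg)

lemma mtrace_smult_minus:
  "A \<in> carrier_mat n n \<Longrightarrow> B \<in> carrier_mat n n \<Longrightarrow> mtrace (c \<cdot>\<^sub>m A - B) = c * mtrace A - mtrace B"
  unfolding mtrace_def by (simp add: sum_subtractf sum_distrib_left)

lemma qform_smult_minus:
  assumes "A \<in> carrier_mat n n" "B \<in> carrier_mat n n"
  shows "qform {..<n} (entries (c \<cdot>\<^sub>m A - B)) v = c * qform {..<n} (entries A) v - qform {..<n} (entries B) v"
proof -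
  have "qform {..<n} (entries (c \<cdot>\<^sub>m A - B)) v = qform {..<n} (\<lambda>i j. c * entries A i j - entries B i j) v"
    using assms by (intro qform_cong_form) (simp add: entries_def)
  then show ?thesis by (simp add: qform_diff qform_scale)
qed

text \<open>For an orthogonal family with \<langle>u k, u k\<rangle> = c, this is the orthogonal projector onto its span.\<close>

definition span_proj :: "'k set \<Rightarrow> ('k \<Rightarrow> 'i \<Rightarrow> complex) \<Rightarrow> real \<Rightarrow> 'i \<Rightarrow> 'i \<Rightarrow> complex" where
  "span_proj S u c y z = (\<Sum>k\<in>S. u k y * cnj (u k z)) / of_real c"

lemma span_proj_cnj: "cnj (span_proj S u c y z) = span_proj S u c z y"
  unfolding span_proj_def by (simp add: cnj_sum mult.commute)

lemma span_proj_idem: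
  fixes c :: real
  assumes S: "finite S" and c: "c > 0"
    and orth: "\<And>k l. k \<in> S \<Longrightarrow> l \<in> S \<Longrightarrow>
      (\<Sum>x\<in>I. cnj (u k x) * u l x) = (if k = l then of_real c else 0)"
  shows "(\<Sum>x\<in>I. span_proj S u c z x * span_proj S u c x y) = span_proj S u c z y"
proof -
  have "(\<Sum>x\<in>I. span_proj S u c z x * span_proj S u c x y)
      = (\<Sum>x\<in>I. \<Sum>k\<in>S. \<Sum>l\<in>S. u l z * cnj (u k y) * (cnj (u l x) * u k x)) / (of_real c)\<^sup>2"
    unfolding span_proj_def by (simp add: sum_product sum_divide_distrib power2_eq_square mult_ac)
  also have "\<dots> = (\<Sum>k\<in>S. \<Sum>l\<in>S. u l z * cnj (u k y) * (\<Sum>x\<in>I. cnj (u l x) * u k x)) / (of_real c)\<^sup>2"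
    by (subst sum.swap, rule arg_cong[where f = "\<lambda>t. t / _"], rule sum.cong[OF refl], subst sum.swap)
      (simp add: sum_distrib_left)
  also have "\<dots> = (\<Sum>k\<in>S. \<Sum>l\<in>S. if l = k then u l z * cnj (u k y) * of_real c else 0) / (of_real c)\<^sup>2"
    by (intro arg_cong[where f = "\<lambda>t. t / _"] sum.cong refl) (simp add: orth)
  also have "\<dots> = (\<Sum>k\<in>S. u k z * cnj (u k y) * of_real c) / (of_real c)\<^sup>2"
    using S by simp
  also have "\<dots> = span_proj S u c z y"
    using c unfolding span_proj_def by (simp add: power2_eq_square sum_distrib_right[symmetric])
  finally show ?thesis .
qed

lemma span_proj_complement_gram:
  fixes c :: real
  assumes I: "finite I" and S: "finite S" and c: "c > 0" and yz: "y \<in> I" "z \<in> I"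
    and orth: "\<And>k l. k \<in> S \<Longrightarrow> l \<in> S \<Longrightarrow>
      (\<Sum>x\<in>I. cnj (u k x) * u l x) = (if k = l then of_real c else 0)"
  shows "(\<Sum>x\<in>I. cnj ((if y = x then 1 else 0) - span_proj S u c y x) * ((if z = x then 1 else 0) - span_proj S u c z x))
    = (if y = z then 1 else 0) - span_proj S u c z y"
proof -
  let ?P = "span_proj S u c"
  have "(\<Sum>x\<in>I. cnj ((if y = x then 1 else 0) - ?P y x) * ((if z = x then 1 else 0) - ?P z x))
      = (\<Sum>x\<in>I. (if y = x then (if z = x then 1 else 0) else 0)
          - (if y = x then ?P z x else 0) - (if z = x then ?P x y else 0) + ?P z x * ?P x y)"
    by (intro sum.cong refl) (auto simp: span_proj_cnj algebra_simps)
  also have "\<dots> = (\<Sum>x\<in>I. if y = x then (if z = x then 1 else 0) else 0)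
      - (\<Sum>x\<in>I. if y = x then ?P z x else 0) - (\<Sum>x\<in>I. if z = x then ?P x y else 0)
      + (\<Sum>x\<in>I. ?P z x * ?P x y)"
    by (simp only: sum.distrib sum_subtractf)
  also have "\<dots> = (if y = z then 1 else 0) - ?P z y"
    using I yz by (simp add: span_proj_idem[OF S c orth])
  finally show ?thesis .
qed

text \<open>With P the projector onto the span of the u k, the left-hand side is c tr(J P), and
  tr(J (1 - P)) is a sum of values of the form of J.\<close>

lemma sum_qform_orthogonal_le_trace:
  fixes u :: "'k \<Rightarrow> 'i \<Rightarrow> complex" and c :: real
  assumes I: "finite I" and S: "finite S" and J: "psd_form I J" and c: "c > 0"
    and orth: "\<And>k l. k \<in> S \<Longrightarrow> l \<in> S \<Longrightarrow>
      (\<Sum>x\<in>I. cnj (u k x) * u l x) = (if k = l then of_real c else 0)"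
  shows "(\<Sum>k\<in>S. qform I J (u k)) \<le> of_real c * (\<Sum>x\<in>I. J x x)"
proof -
  let ?P = "span_proj S u c"
  have "0 \<le> (\<Sum>x\<in>I. qform I J (\<lambda>y. (if y = x then 1 else 0) - ?P y x))"
    using J unfolding psd_form_def by (simp add: sum_nonneg)
  also have "\<dots> = (\<Sum>y\<in>I. \<Sum>z\<in>I. J y z * ((if y = z then 1 else 0) - ?P z y))"
    using span_proj_complement_gram[OF I S c _ _ orth] by (simp add: sum_qform cong: sum.cong)
  also have "\<dots> = (\<Sum>y\<in>I. \<Sum>z\<in>I. if y = z then J y z else 0) - (\<Sum>y\<in>I. \<Sum>z\<in>I. J y z * ?P z y)"
    by (simp add: right_diff_distrib sum_subtractf if_distrib[of "\<lambda>t. _ * t"] cong: if_cong)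
  also have "(\<Sum>y\<in>I. \<Sum>z\<in>I. J y z * ?P z y) = (\<Sum>k\<in>S. qform I J (u k)) / of_real c"
    unfolding span_proj_def qform_def
    by (simp add: sum_distrib_left sum_divide_distrib sum.swap[of _ S] mult_ac)
  finally show ?thesis
    using I c by (simp add: less_eq_complex_def field_simps)
qed

lemma qform_lincomb: "qform I G (\<lambda>i. \<Sum>k\<in>S. g k * w k i) = qform S (gram I G w) g"
proof -
  have "gram I G w = sandwich I (\<lambda>k i. cnj (w k i)) G"
    by (simp add: gram_def sandwich_def fun_eq_iff)
  moreover have "adj_apply S (\<lambda>k i. cnj (w k i)) g = (\<lambda>i. \<Sum>k\<in>S. g k * w k i)"
    by (simp add: adj_apply_def fun_eq_iff mult.commute)
  ultimately show ?thesis
    by (simp add: qform_sandwich)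
qed

lemma psd_form_gram: "psd_form I G \<Longrightarrow> psd_form S (gram I G w)"
  unfolding psd_form_def by (metis qform_lincomb)

lemma gram_diag: "gram I G w k k = qform I G (w k)"
  by (simp add: gram_def qform_def)

lemma qform_lincomb_le:
  fixes c :: real
  assumes "finite I" "finite S" "psd_form I G" "(\<Sum>k\<in>S. cnj (g k) * g k) = of_real c" "c > 0"
  shows "qform I G (\<lambda>i. \<Sum>k\<in>S. g k * w k i) \<le> of_real c * (\<Sum>k\<in>S. qform I G (w k))"
proof -
  have "qform S (gram I G w) g \<le> of_real c * (\<Sum>k\<in>S. gram I G w k k)"
    using sum_qform_orthogonal_le_trace[of S "{()}" "gram I G w" c "\<lambda>_. g"] assms
    by (simp add: psd_form_gram)
  then show ?thesis by (simp add: qform_lincomb gram_diag)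
qed

lemma sum_qform_orthonormal_mix:
  assumes "finite S"
    and orth: "\<And>m m'. m \<in> S \<Longrightarrow> m' \<in> S \<Longrightarrow>
      (\<Sum>p\<in>P. cnj (\<beta> p m) * \<beta> p m') = (if m = m' then 1 else 0)"
  shows "(\<Sum>p\<in>P. qform I G (\<lambda>i. \<Sum>m\<in>S. \<beta> p m * u m i)) = (\<Sum>m\<in>S. qform I G (u m))"
proof -
  have "(\<Sum>p\<in>P. qform I G (\<lambda>i. \<Sum>m\<in>S. \<beta> p m * u m i)) = (\<Sum>p\<in>P. qform S (gram I G u) (\<beta> p))"
    by (simp add: qform_lincomb)
  also have "\<dots> = (\<Sum>m\<in>S. \<Sum>m'\<in>S. if m = m' then gram I G u m m' else 0)"
    by (simp add: sum_qform orth if_distrib[of "\<lambda>t. _ * t"] cong: sum.cong if_cong)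
  finally show ?thesis
    using assms(1) by (simp add: gram_diag)
qed

section \<open>Entries of tensor-product constructions\<close>

lemma kron_index:
  "A \<in> carrier_mat ra ca \<Longrightarrow> B \<in> carrier_mat rb cb \<Longrightarrow> i < ra * rb \<Longrightarrow> j < ca * cb \<Longrightarrow>
    kron A B $$ (i, j) = A $$ (i div rb, j div cb) * B $$ (i mod rb, j mod cb)"
  unfolding kron_def by auto

lemma msum_carrier: "msum n m f S \<in> carrier_mat n m"
  unfolding msum_def by auto

lemma msum_index: "i < n \<Longrightarrow> j < m \<Longrightarrow> msum n m f S $$ (i, j) = (\<Sum>s\<in>S. f s $$ (i, j))"
  unfolding msum_def by auto

lemma block_carrier: "block d X a a' \<in> carrier_mat d d"
  unfolding block_def by auto

lemma block_index: "i < d \<Longrightarrow> j < d \<Longrightarrow> block d X a a' $$ (i, j) = X $$ (a * d + i, a' * d + j)"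
  unfolding block_def by auto

lemma eunit_carrier: "eunit d a a' \<in> carrier_mat d d"
  unfolding eunit_def by auto

lemma eunit_index: "i < d \<Longrightarrow> j < d \<Longrightarrow> eunit d a a' $$ (i, j) = (if i = a \<and> j = a' then 1 else 0)"
  unfolding eunit_def by auto

lemma mtrace_eunit: "a < d \<Longrightarrow> a' < d \<Longrightarrow> mtrace (eunit d a a') = (if a = a' then 1 else 0)"
  unfolding mtrace_def eunit_def by (cases "a = a'") (auto intro!: sum.neutral)

lemma lin_map_smult: "lin_map d Q \<Longrightarrow> X \<in> carrier_mat d d \<Longrightarrow> Q (c \<cdot>\<^sub>m X) = c \<cdot>\<^sub>m Q X"
  unfolding lin_map_def by blast

lemma map_tensor_carrier: "map_tensor \<Phi> \<Psi> r d X \<in> carrier_mat (r * d) (r * d)"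
  unfolding map_tensor_def by (rule msum_carrier)

lemma map_tensor_id_index:
  assumes M: "\<And>a a'. a < r \<Longrightarrow> a' < r \<Longrightarrow> M (block d X a a') \<in> carrier_mat d d"
    and ij: "i < r * d" "j < r * d"
  shows "map_tensor (\<lambda>Y. Y) M r d X $$ (i, j) = M (block d X (i div d) (j div d)) $$ (i mod d, j mod d)"
proof -
  have ir: "i div d < r" "j div d < r"
    using ij by (auto intro: less_mult_imp_div_less)
  have "map_tensor (\<lambda>Y. Y) M r d X $$ (i, j)
      = (\<Sum>p\<in>{..<r} \<times> {..<r}. (case p of (a, a') \<Rightarrow> kron (eunit r a a') (M (block d X a a'))) $$ (i, j))"
    unfolding map_tensor_def using ij by (simp add: msum_index)
  also have "\<dots> = (\<Sum>p\<in>{..<r} \<times> {..<r}.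
      if p = (i div d, j div d) then M (block d X (fst p) (snd p)) $$ (i mod d, j mod d) else 0)"
  proof (rule sum.cong[OF refl])
    fix p assume p: "p \<in> {..<r} \<times> {..<r}"
    obtain a a' where pa: "p = (a, a')" by (cases p)
    have "kron (eunit r a a') (M (block d X a a')) $$ (i, j)
        = eunit r a a' $$ (i div d, j div d) * M (block d X a a') $$ (i mod d, j mod d)"
      using kron_index[OF eunit_carrier M ij] p pa by auto
    then show "(case p of (a, a') \<Rightarrow> kron (eunit r a a') (M (block d X a a'))) $$ (i, j)
       = (if p = (i div d, j div d) then M (block d X (fst p) (snd p)) $$ (i mod d, j mod d) else 0)"
      using ir pa by (auto simp: eunit_index)
  qed
  also have "\<dots> = M (block d X (i div d) (j div d)) $$ (i mod d, j mod d)"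
    using ir by (simp add: sum.delta')
  finally show ?thesis .
qed

lemma map_tensor_repl_id_index:
  assumes Q: "\<And>a a'. Q (block dB X a a') \<in> carrier_mat dB dB"
    and xy: "x < dA * dB" "y < dA * dB"
  shows "map_tensor (repl_id dA) Q dA dB X $$ (x, y)
    = (if x div dB = y div dB then (\<Sum>c<dA. Q (block dB X c c) $$ (x mod dB, y mod dB)) else 0)"
proof -
  have ir: "x div dB < dA" "y div dB < dA"
    using xy by (auto intro: less_mult_imp_div_less)
  have R: "repl_id dA E \<in> carrier_mat dA dA" for E
    unfolding repl_id_def by auto
  have "map_tensor (repl_id dA) Q dA dB X $$ (x, y)
      = (\<Sum>(c, c')\<in>{..<dA} \<times> {..<dA}. kron (repl_id dA (eunit dA c c')) (Q (block dB X c c')) $$ (x, y))"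
    unfolding map_tensor_def using xy by (simp add: msum_index split_def)
  also have "\<dots> = (\<Sum>c<dA. \<Sum>c'<dA. if c' = c then
      (if x div dB = y div dB then Q (block dB X c c) $$ (x mod dB, y mod dB) else 0) else 0)"
    unfolding sum.cartesian_product[symmetric]
    using ir by (intro sum.cong refl) (subst kron_index[OF R Q xy], auto simp: repl_id_def mtrace_eunit)
  also have "\<dots> = (if x div dB = y div dB then (\<Sum>c<dA. Q (block dB X c c) $$ (x mod dB, y mod dB)) else 0)"
    by simp
  finally show ?thesis .
qed

lemma mult_adj_index:
  assumes "A \<in> carrier_mat n n" "X \<in> carrier_mat n n" "p < n" "q < n"
  shows "(A * X * adj A) $$ (p, q) = sandwich {..<n} (entries A) (entries X) p q"
proof -
  have "(A * X * adj A) $$ (p, q) = (\<Sum>t<n. (\<Sum>s<n. A $$ (p, s) * X $$ (s, t)) * cnj (A $$ (q, t)))"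
    using assms by (simp add: scalar_prod_def atLeast0LessThan row_def col_def adj_carrier)
  also have "\<dots> = (\<Sum>t<n. \<Sum>s<n. A $$ (p, s) * X $$ (s, t) * cnj (A $$ (q, t)))"
    by (simp add: sum_distrib_right)
  also have "\<dots> = sandwich {..<n} (entries A) (entries X) p q"
    unfolding sandwich_def entries_def by (rule sum.swap)
  finally show ?thesis .
qed

lemma ctrl_unitary_index:
  assumes "\<And>j. j < dA \<Longrightarrow> b j \<in> carrier_vec dA" "\<And>j. j < dA \<Longrightarrow> U j \<in> carrier_mat dB dB"
    and "x < dA * dB" "y < dA * dB"
  shows "ctrl_unitary dA dB b U $$ (x, y)
    = (\<Sum>j<dA. b j $ (x div dB) * cnj (b j $ (y div dB)) * U j $$ (x mod dB, y mod dB))"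
proof -
  have xy: "x div dB < dA" "y div dB < dA"
    using assms(3,4) by (auto intro: less_mult_imp_div_less)
  have "ctrl_unitary dA dB b U $$ (x, y) = (\<Sum>j<dA. kron (outer (b j) (b j)) (U j) $$ (x, y))"
    unfolding ctrl_unitary_def using assms(3,4) by (simp add: msum_index)
  also have "\<dots> = (\<Sum>j<dA. b j $ (x div dB) * cnj (b j $ (y div dB)) * U j $$ (x mod dB, y mod dB))"
  proof (rule sum.cong[OF refl])
    fix j assume "j \<in> {..<dA}"
    then have "b j \<in> carrier_vec dA" "U j \<in> carrier_mat dB dB" using assms(1,2) by auto
    moreover from this(1) have "outer (b j) (b j) \<in> carrier_mat dA dA" by (simp add: outer_def)
    ultimately show "kron (outer (b j) (b j)) (U j) $$ (x, y)
        = b j $ (x div dB) * cnj (b j $ (y div dB)) * U j $$ (x mod dB, y mod dB)"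
      using assms(3,4) xy by (subst kron_index) (auto simp: outer_def)
  qed
  finally show ?thesis .
qed

section \<open>Kraus decompositions\<close>

text \<open>The entry functions of 1 \<otimes> K and of |c\<rangle>\<langle>e| \<otimes> K, the first tensor factor being the more
  significant index.\<close>

definition id_kron :: "nat \<Rightarrow> (nat \<Rightarrow> nat \<Rightarrow> complex) \<Rightarrow> nat \<Rightarrow> nat \<Rightarrow> complex" where
  "id_kron d K i k = (if k div d = i div d then K (i mod d) (k mod d) else 0)"

definition eunit_kron :: "nat \<Rightarrow> nat \<Rightarrow> nat \<Rightarrow> (nat \<Rightarrow> nat \<Rightarrow> complex) \<Rightarrow> nat \<Rightarrow> nat \<Rightarrow> complex" where
  "eunit_kron d c e K p s = (if p div d = c \<and> s div d = e then K (p mod d) (s mod d) else 0)"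

lemma sandwich_cong:
  "(\<And>j j'. j \<in> J \<Longrightarrow> j' \<in> J \<Longrightarrow> F j j' = G j j') \<Longrightarrow> sandwich J K F i i' = sandwich J K G i i'"
  unfolding sandwich_def by (intro sum.cong refl) auto

lemma sum_sandwich_blocks:
  fixes a a' r d :: nat and X :: "nat \<Rightarrow> nat \<Rightarrow> complex"
  assumes "a < r" "a' < r"
  shows "(\<Sum>k<r * d. \<Sum>l<r * d. (if k div d = a then F (k mod d) else 0) * X k l
      * cnj (if l div d = a' then G (l mod d) else 0))
    = (\<Sum>s<d. \<Sum>t<d. F s * X (a * d + s) (a' * d + t) * cnj (G t))"
proof -
  have "(\<Sum>k<r * d. \<Sum>l<r * d. (if k div d = a then F (k mod d) else 0) * X k l
      * cnj (if l div d = a' then G (l mod d) else 0))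
    = (\<Sum>k<r * d. if k div d = a then
        (\<Sum>l<r * d. if l div d = a' then F (k mod d) * X k l * cnj (G (l mod d)) else 0) else 0)"
    by (intro sum.cong refl) (auto intro!: sum.cong sum.neutral)
  also have "\<dots> = (\<Sum>s<d. \<Sum>l<r * d. if l div d = a' then F s * X (a * d + s) l * cnj (G (l mod d)) else 0)"
    by (rule trans[OF sum_lessThan_mult_div_eq[OF assms(1)]]) (intro sum.cong refl, simp)
  also have "\<dots> = (\<Sum>s<d. \<Sum>t<d. F s * X (a * d + s) (a' * d + t) * cnj (G t))"
    by (rule sum.cong[OF refl], rule trans[OF sum_lessThan_mult_div_eq[OF assms(2)]])
      (intro sum.cong refl, simp)
  finally show ?thesis .
qed

lemma sandwich_id_kron:
  assumes "i < r * d" "j < r * d"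
  shows "sandwich {..<r * d} (id_kron d K) F i j
    = sandwich {..<d} K (\<lambda>s t. F (i div d * d + s) (j div d * d + t)) (i mod d) (j mod d)"
proof -
  have ir: "i div d < r" "j div d < r"
    using assms by (auto intro: less_mult_imp_div_less)
  show ?thesis
    unfolding sandwich_def id_kron_def
    by (rule sum_sandwich_blocks[OF ir, where F = "\<lambda>s. K (i mod d) s" and G = "\<lambda>t. K (j mod d) t"])
qed

lemma sandwich_eunit_kron:
  fixes F :: "nat \<Rightarrow> nat \<Rightarrow> complex"
  assumes "e < m"
  shows "sandwich {..<m * d} (eunit_kron d c e K) F x y
    = (if x div d = c \<and> y div d = c
       then sandwich {..<d} K (\<lambda>s t. F (e * d + s) (e * d + t)) (x mod d) (y mod d) else 0)"
proof (cases "x div d = c \<and> y div d = c")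
  case True
  then show ?thesis
    unfolding sandwich_def eunit_kron_def
    using sum_sandwich_blocks[OF assms assms, where F = "\<lambda>s. K (x mod d) s" and G = "\<lambda>t. K (y mod d) t"]
    by simp
next
  case False
  then show ?thesis
    unfolding sandwich_def eunit_kron_def by (auto intro!: sum.neutral)
qed

lemma sum_id_kron_column:
  assumes "s < r * d"
  shows "(\<Sum>p<r * d. cnj (id_kron d K p s) * id_kron d K p t)
    = (if s div d = t div d then (\<Sum>x<d. cnj (K x (s mod d)) * K x (t mod d)) else 0)"
proof -
  have "(\<Sum>p<r * d. cnj (id_kron d K p s) * id_kron d K p t)
      = (\<Sum>p<r * d. if p div d = s div d then
          (if s div d = t div d then cnj (K (p mod d) (s mod d)) * K (p mod d) (t mod d) else 0) else 0)"
    unfolding id_kron_def by (intro sum.cong refl) auto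
  also have "\<dots> = (\<Sum>x<d. if s div d = t div d then cnj (K x (s mod d)) * K x (t mod d) else 0)"
    using assms by (intro trans[OF sum_lessThan_mult_div_eq] sum.cong refl)
      (auto intro: less_mult_imp_div_less)
  finally show ?thesis by simp
qed

lemma sum_eunit_kron_column:
  assumes "c < m"
  shows "(\<Sum>p<m * d. cnj (eunit_kron d c e K p s) * eunit_kron d c e K p t)
    = (if s div d = e \<and> t div d = e then (\<Sum>x<d. cnj (K x (s mod d)) * K x (t mod d)) else 0)"
proof -
  have "(\<Sum>p<m * d. cnj (eunit_kron d c e K p s) * eunit_kron d c e K p t)
      = (\<Sum>p<m * d. if p div d = c then (if s div d = e \<and> t div d = e
          then cnj (K (p mod d) (s mod d)) * K (p mod d) (t mod d) else 0) else 0)"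
    unfolding eunit_kron_def by (intro sum.cong refl) auto
  also have "\<dots> = (\<Sum>x<d. if s div d = e \<and> t div d = e then cnj (K x (s mod d)) * K x (t mod d) else 0)"
    by (rule trans[OF sum_lessThan_mult_div_eq[OF assms]]) (intro sum.cong refl, simp)
  also have "\<dots> = (if s div d = e \<and> t div d = e then (\<Sum>x<d. cnj (K x (s mod d)) * K x (t mod d)) else 0)"
    by (cases "s div d = e"; cases "t div d = e") simp_all
  finally show ?thesis .
qed

text \<open>M Y = (\<Sum>k\<in>S. w k * K k * Y * adj (K k)); the nonnegative weights spare us the square
  roots usually absorbed into the Kraus operators.\<close>

definition kraus_form ::
    "nat \<Rightarrow> (complex mat \<Rightarrow> complex mat) \<Rightarrow> 'k set \<Rightarrow> ('k \<Rightarrow> real) \<Rightarrow> ('k \<Rightarrow> nat \<Rightarrow> nat \<Rightarrow> complex) \<Rightarrow> bool" where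
  "kraus_form d M S w K \<longleftrightarrow> finite S \<and> (\<forall>k\<in>S. 0 \<le> w k) \<and>
     (\<forall>Y \<in> carrier_mat d d. M Y \<in> carrier_mat d d \<and>
        (\<forall>p<d. \<forall>q<d. M Y $$ (p, q) = (\<Sum>k\<in>S. of_real (w k) * sandwich {..<d} (K k) (entries Y) p q)))"

definition kraus_complete ::
    "nat \<Rightarrow> 'k set \<Rightarrow> ('k \<Rightarrow> real) \<Rightarrow> ('k \<Rightarrow> nat \<Rightarrow> nat \<Rightarrow> complex) \<Rightarrow> complex \<Rightarrow> bool" where
  "kraus_complete d S w K \<kappa> \<longleftrightarrow> (\<forall>s<d. \<forall>t<d.
     (\<Sum>k\<in>S. of_real (w k) * (\<Sum>p<d. cnj (K k p s) * K k p t)) = (if s = t then \<kappa> else 0))"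

lemma kraus_formD:
  assumes "kraus_form d M S w K"
  shows "finite S" "k \<in> S \<Longrightarrow> 0 \<le> w k" "Y \<in> carrier_mat d d \<Longrightarrow> M Y \<in> carrier_mat d d"
    "Y \<in> carrier_mat d d \<Longrightarrow> p < d \<Longrightarrow> q < d \<Longrightarrow>
      M Y $$ (p, q) = (\<Sum>k\<in>S. of_real (w k) * sandwich {..<d} (K k) (entries Y) p q)"
  using assms unfolding kraus_form_def by auto

lemma kraus_form_conj:
  assumes "A \<in> carrier_mat n n"
  shows "kraus_form n (\<lambda>X. A * X * adj A) {()} (\<lambda>_. 1) (\<lambda>_. entries A)"
  unfolding kraus_form_def
proof (intro conjI ballI allI impI)
  fix X :: "complex mat" and p q assume "X \<in> carrier_mat n n" "p < n" "q < n"
  then show "(A * X * adj A) $$ (p, q) = (\<Sum>k\<in>{()}. of_real 1 * sandwich {..<n} (entries A) (entries X) p q)"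
    using mult_adj_index[OF assms] by simp
qed (use assms in \<open>auto simp: adj_carrier\<close>)

lemma kraus_form_map_tensor_id:
  assumes M: "kraus_form d M S w K"
  shows "kraus_form (r * d) (map_tensor (\<lambda>Y. Y) M r d) S w (\<lambda>k. id_kron d (K k))"
  unfolding kraus_form_def
proof (intro conjI ballI allI impI)
  fix X :: "complex mat" and i j assume X: "X \<in> carrier_mat (r * d) (r * d)" and ij: "i < r * d" "j < r * d"
  have mod_less: "i mod d < d" "j mod d < d"
    using ij by (metis mod_less_divisor mult_0_right not_less_zero gr0I)+
  have "map_tensor (\<lambda>Y. Y) M r d X $$ (i, j) = M (block d X (i div d) (j div d)) $$ (i mod d, j mod d)"
    using ij by (intro map_tensor_id_index kraus_formD(3)[OF M] block_carrier)
  also have "\<dots> = (\<Sum>k\<in>S. of_real (w k) *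
      sandwich {..<d} (K k) (\<lambda>s t. X $$ (i div d * d + s, j div d * d + t)) (i mod d) (j mod d))"
  proof -
    have blk: "sandwich {..<d} L (entries (block d X a a')) p q
        = sandwich {..<d} L (\<lambda>s t. X $$ (a * d + s, a' * d + t)) p q" for L a a' p q
      by (rule sandwich_cong) (simp add: entries_def block_index)
    show ?thesis
      using mod_less by (simp add: kraus_formD(4)[OF M block_carrier] blk)
  qed
  also have "\<dots> = (\<Sum>k\<in>S. of_real (w k) * sandwich {..<r * d} (id_kron d (K k)) (entries X) i j)"
    using ij by (simp add: sandwich_id_kron entries_def)
  finally show "map_tensor (\<lambda>Y. Y) M r d X $$ (i, j)
    = (\<Sum>k\<in>S. of_real (w k) * sandwich {..<r * d} (id_kron d (K k)) (entries X) i j)" .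
qed (use M in \<open>auto simp: kraus_form_def map_tensor_carrier\<close>)

lemma kraus_complete_id_kron:
  assumes complete: "kraus_complete d S w K \<kappa>"
  shows "kraus_complete (r * d) S w (\<lambda>k. id_kron d (K k)) \<kappa>"
  unfolding kraus_complete_def
proof (intro allI impI)
  fix s t assume st: "s < r * d" "t < r * d"
  have "0 < d" using st by (cases d) auto
  then have "s mod d < d" "t mod d < d" by auto
  with nat_eq_iff_div_mod_eq[of s t d] show "(\<Sum>k\<in>S. of_real (w k)
      * (\<Sum>p<r * d. cnj (id_kron d (K k) p s) * id_kron d (K k) p t)) = (if s = t then \<kappa> else 0)"
    using complete unfolding kraus_complete_def sum_id_kron_column[OF st(1)]
    by (cases "s div d = t div d") auto
qed

lemma kraus_form_map_tensor_repl_id: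
  assumes Q: "kraus_form d Q S w K"
  shows "kraus_form (m * d) (map_tensor (repl_id m) Q m d) ({..<m} \<times> {..<m} \<times> S)
    (\<lambda>(c, e, k). w k) (\<lambda>(c, e, k). eunit_kron d c e (K k))"
  unfolding kraus_form_def
proof (intro conjI ballI allI impI)
  fix Y :: "complex mat" and x y assume Y: "Y \<in> carrier_mat (m * d) (m * d)" and xy: "x < m * d" "y < m * d"
  have x: "x div d < m" using xy by (auto intro: less_mult_imp_div_less)
  have mod_less: "x mod d < d" "y mod d < d"
    using xy by (metis mod_less_divisor mult_0_right not_less_zero gr0I)+
  have blk: "sandwich {..<d} L (entries (block d Y e e)) p q
      = sandwich {..<d} L (\<lambda>s t. entries Y (e * d + s) (e * d + t)) p q" for L e p q
    by (rule sandwich_cong) (simp add: entries_def block_index)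
  have "map_tensor (repl_id m) Q m d Y $$ (x, y)
      = (if x div d = y div d then (\<Sum>e<m. Q (block d Y e e) $$ (x mod d, y mod d)) else 0)"
    using xy by (intro map_tensor_repl_id_index kraus_formD(3)[OF Q] block_carrier)
  also have "\<dots> = (\<Sum>c<m. if x div d = c \<and> y div d = c then (\<Sum>e<m. \<Sum>k\<in>S. of_real (w k) *
      sandwich {..<d} (K k) (\<lambda>s t. entries Y (e * d + s) (e * d + t)) (x mod d) (y mod d)) else 0)"
    using x mod_less by (auto simp: kraus_formD(4)[OF Q block_carrier] blk intro!: sum.neutral)
  also have "\<dots> = (\<Sum>c<m. \<Sum>e<m. \<Sum>k\<in>S. of_real (w k) * sandwich {..<m * d} (eunit_kron d c e (K k)) (entries Y) x y)"
    by (rule sum.cong[OF refl]) (auto simp: sandwich_eunit_kron)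
  also have "\<dots> = (\<Sum>(c, e, k)\<in>{..<m} \<times> {..<m} \<times> S. of_real (w k) * sandwich {..<m * d} (eunit_kron d c e (K k)) (entries Y) x y)"
    by (simp add: sum.cartesian_product)
  finally show "map_tensor (repl_id m) Q m d Y $$ (x, y) = (\<Sum>p\<in>{..<m} \<times> {..<m} \<times> S.
      of_real (case p of (c, e, k) \<Rightarrow> w k) * sandwich {..<m * d} (case p of (c, e, k) \<Rightarrow> eunit_kron d c e (K k)) (entries Y) x y)"
    by (simp add: split_def)
qed (use Q in \<open>auto simp: kraus_form_def map_tensor_carrier\<close>)

lemma kraus_complete_map_tensor_repl_id:
  assumes complete: "kraus_complete d S w K \<kappa>"
  shows "kraus_complete (m * d) ({..<m} \<times> {..<m} \<times> S) (\<lambda>(c, e, k). w k)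
    (\<lambda>(c, e, k). eunit_kron d c e (K k)) (of_nat m * \<kappa>)"
  unfolding kraus_complete_def
proof (intro allI impI)
  fix s t assume st: "s < m * d" "t < m * d"
  have "0 < d" using st by (cases d) auto
  then have mod_less: "s mod d < d" "t mod d < d" by auto
  have s: "s div d < m" using st by (auto intro: less_mult_imp_div_less)
  have "(\<Sum>(c, e, k)\<in>{..<m} \<times> {..<m} \<times> S. of_real (w k)
        * (\<Sum>p<m * d. cnj (eunit_kron d c e (K k) p s) * eunit_kron d c e (K k) p t))
      = (\<Sum>c<m. \<Sum>e<m. \<Sum>k\<in>S. of_real (w k)
        * (\<Sum>p<m * d. cnj (eunit_kron d c e (K k) p s) * eunit_kron d c e (K k) p t))"
    by (simp add: sum.cartesian_product)
  also have "\<dots> = (\<Sum>c<m. \<Sum>e<m. if s div d = e \<and> t div d = e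
      then (\<Sum>k\<in>S. of_real (w k) * (\<Sum>x<d. cnj (K k x (s mod d)) * K k x (t mod d))) else 0)"
    by (intro sum.cong refl) (auto simp: sum_eunit_kron_column)
  also have "\<dots> = (\<Sum>c<m. if s div d = t div d then (if s mod d = t mod d then \<kappa> else 0) else 0)"
    using complete mod_less s unfolding kraus_complete_def by (intro sum.cong refl) (auto intro!: sum.neutral)
  also have "\<dots> = (if s = t then of_nat m * \<kappa> else 0)"
    using nat_eq_iff_div_mod_eq[of s t d] by simp
  finally show "(\<Sum>p\<in>{..<m} \<times> {..<m} \<times> S. of_real (case p of (c, e, k) \<Rightarrow> w k)
      * (\<Sum>x<m * d. cnj ((case p of (c, e, k) \<Rightarrow> eunit_kron d c e (K k)) x s)
          * (case p of (c, e, k) \<Rightarrow> eunit_kron d c e (K k)) x t))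
    = (if s = t then of_nat m * \<kappa> else 0)"
    by (simp add: split_def)
qed

lemma qform_kraus:
  assumes "kraus_form n M S w K" "X \<in> carrier_mat n n"
  shows "qform {..<n} (entries (M X)) v
    = (\<Sum>k\<in>S. of_real (w k) * qform {..<n} (entries X) (adj_apply {..<n} (K k) v))"
proof -
  have "qform {..<n} (entries (M X)) v
      = qform {..<n} (\<lambda>i j. \<Sum>k\<in>S. of_real (w k) * sandwich {..<n} (K k) (entries X) i j) v"
    by (rule qform_cong_form) (simp add: entries_def kraus_formD(4)[OF assms])
  then show ?thesis
    by (simp add: qform_sum qform_scale qform_sandwich)
qed

lemma psd_kraus:
  assumes M: "kraus_form n M S w K" and X: "psd n X"
  shows "psd n (M X)"
proof -
  have carrier: "X \<in> carrier_mat n n" and form: "psd_form {..<n} (entries X)"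
    using X by (auto simp: psd_iff_psd_form)
  have "0 \<le> qform {..<n} (entries (M X)) v" for v
    unfolding qform_kraus[OF M carrier] using form kraus_formD(2)[OF M]
    by (intro sum_nonneg mult_nonneg_nonneg) (auto simp: psd_form_def less_eq_complex_def)
  then show ?thesis
    using kraus_formD(3)[OF M carrier] by (simp add: psd_iff_psd_form psd_form_def)
qed

lemma mtrace_kraus:
  assumes M: "kraus_form n M S w K" and complete: "kraus_complete n S w K \<kappa>"
    and X: "X \<in> carrier_mat n n"
  shows "mtrace (M X) = \<kappa> * mtrace X"
proof -
  have "mtrace (M X)
      = (\<Sum>p<n. \<Sum>k\<in>S. \<Sum>s<n. \<Sum>t<n. of_real (w k) * (K k p s * X $$ (s, t) * cnj (K k p t)))"
    unfolding mtrace_def using kraus_formD(3,4)[OF M X]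
    by (simp add: sandwich_def entries_def sum_distrib_left)
  also have "\<dots> = (\<Sum>s<n. \<Sum>t<n. \<Sum>p<n. \<Sum>k\<in>S. of_real (w k) * (K k p s * X $$ (s, t) * cnj (K k p t)))"
    by (rule sum_swap_pairs)
  also have "\<dots> = (\<Sum>s<n. \<Sum>t<n. X $$ (s, t) * (\<Sum>k\<in>S. of_real (w k) * (\<Sum>p<n. cnj (K k p t) * K k p s)))"
    by (intro sum.cong refl, subst sum.swap) (simp add: sum_distrib_left mult_ac)
  also have "\<dots> = (\<Sum>s<n. \<Sum>t<n. if t = s then \<kappa> * X $$ (s, t) else 0)"
    using complete unfolding kraus_complete_def by (intro sum.cong refl) auto
  also have "\<dots> = \<kappa> * mtrace X"
    using X by (simp add: mtrace_def sum_distrib_left)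
  finally show ?thesis .
qed

lemma sandwich_add:
  "sandwich J K (\<lambda>i j. F i j + G i j) p q = sandwich J K F p q + sandwich J K G p q"
  unfolding sandwich_def by (simp add: algebra_simps sum.distrib)

lemma sandwich_scale: "sandwich J K (\<lambda>i j. c * F i j) p q = c * sandwich J K F p q"
  unfolding sandwich_def by (simp add: sum_distrib_left mult_ac)

lemma lin_map_kraus:
  assumes M: "kraus_form d M S w K"
  shows "lin_map d M"
  unfolding lin_map_def
proof (intro conjI ballI allI)
  fix X Y :: "complex mat" assume X: "X \<in> carrier_mat d d" and Y: "Y \<in> carrier_mat d d"
  have add: "sandwich {..<d} L (entries (X + Y)) p q
      = sandwich {..<d} L (entries X) p q + sandwich {..<d} L (entries Y) p q" for L p q
    unfolding sandwich_add[symmetric] by (rule sandwich_cong) (use X Y in \<open>simp add: entries_def\<close>)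
  have "M (X + Y) $$ (p, q) = M X $$ (p, q) + M Y $$ (p, q)" if "p < d" "q < d" for p q
    using X Y that by (simp add: kraus_formD(4)[OF M] add distrib_left sum.distrib)
  then show "M (X + Y) = M X + M Y"
    using X Y kraus_formD(3)[OF M, of "X + Y"] kraus_formD(3)[OF M, of X] kraus_formD(3)[OF M, of Y]
    by (intro eq_matI) auto
next
  fix X :: "complex mat" and c assume X: "X \<in> carrier_mat d d"
  have scale: "sandwich {..<d} L (entries (c \<cdot>\<^sub>m X)) p q = c * sandwich {..<d} L (entries X) p q" for L p q
    unfolding sandwich_scale[symmetric] by (rule sandwich_cong) (use X in \<open>simp add: entries_def\<close>)
  have "M (c \<cdot>\<^sub>m X) $$ (p, q) = c * M X $$ (p, q)" if "p < d" "q < d" for p q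
    using X that by (simp add: kraus_formD(4)[OF M] scale sum_distrib_left mult_ac)
  then show "M (c \<cdot>\<^sub>m X) = c \<cdot>\<^sub>m M X"
    using X kraus_formD(3)[OF M, of "c \<cdot>\<^sub>m X"] kraus_formD(3)[OF M, of X] by (intro eq_matI) auto
qed (use M in \<open>simp add: kraus_formD\<close>)

lemma channel_kraus:
  assumes M: "kraus_form d M S w K" and complete: "kraus_complete d S w K 1"
  shows "channel d M"
  unfolding channel_def
  using lin_map_kraus[OF M] mtrace_kraus[OF M complete]
    psd_kraus[OF kraus_form_map_tensor_id[OF M]]
  by simp

definition unitary_mixture :: "nat \<Rightarrow> nat \<Rightarrow> (nat \<Rightarrow> complex mat) \<Rightarrow> complex mat \<Rightarrow> complex mat" where
  "unitary_mixture n d U Y =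
     mat d d (\<lambda>(p, q). \<Sum>j<n. of_real (1 / real n) * sandwich {..<d} (entries (U j)) (entries Y) p q)"

lemma kraus_form_unitary_mixture:
  "kraus_form d (unitary_mixture n d U) {..<n} (\<lambda>_. 1 / real n) (\<lambda>j. entries (U j))"
  unfolding kraus_form_def unitary_mixture_def by auto

lemma unitary_adj_mult_index:
  assumes "unitary d U" "s < d" "t < d"
  shows "(\<Sum>p<d. cnj (U $$ (p, s)) * U $$ (p, t)) = (if s = t then 1 else 0)"
proof -
  have U: "U \<in> carrier_mat d d" and "adj U * U = 1\<^sub>m d"
    using assms(1) unfolding unitary_def by auto
  moreover have "(adj U * U) $$ (s, t) = (\<Sum>p<d. cnj (U $$ (p, s)) * U $$ (p, t))"
    using U assms by (simp add: scalar_prod_def atLeast0LessThan row_def col_def)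
  ultimately show ?thesis using assms by simp
qed

lemma kraus_complete_unitary_mixture:
  "0 < n \<Longrightarrow> (\<And>j. j < n \<Longrightarrow> unitary d (U j)) \<Longrightarrow>
    kraus_complete d {..<n} (\<lambda>_. 1 / real n) (\<lambda>j. entries (U j)) 1"
  by (simp add: kraus_complete_def entries_def unitary_adj_mult_index flip: sum_distrib_left)

lemma channel_unitary_mixture:
  "0 < n \<Longrightarrow> (\<And>j. j < n \<Longrightarrow> unitary d (U j)) \<Longrightarrow> channel d (unitary_mixture n d U)"
  by (rule channel_kraus[OF kraus_form_unitary_mixture kraus_complete_unitary_mixture])

section \<open>Max-relative entropy and conditional min-entropy\<close>

lemma Dmax_le_log:
  fixes c \<kappa> :: real
  assumes psd: "psd n (of_real c \<cdot>\<^sub>m \<sigma> - \<rho>)"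
    and carrier: "\<rho> \<in> carrier_mat n n" "\<sigma> \<in> carrier_mat n n"
    and trace: "mtrace \<rho> = 1" "mtrace \<sigma> = of_real \<kappa>" "0 < \<kappa>"
  shows "Dmax n \<rho> \<sigma> \<le> ereal (log 2 c)"
proof -
  define L where "L = {l::real. psd n (of_real l \<cdot>\<^sub>m \<sigma> - \<rho>)}"
  have "c \<in> L" using psd by (simp add: L_def)
  have lower: "1 / \<kappa> \<le> l" if "l \<in> L" for l
  proof -
    have "0 \<le> mtrace (of_real l \<cdot>\<^sub>m \<sigma> - \<rho>)"
      using that by (simp add: L_def psd_mtrace_nonneg)
    also have "\<dots> = of_real (l * \<kappa> - 1)"
      using carrier trace by (simp add: mtrace_smult_minus)
    finally show ?thesis using trace(3) by (simp add: less_eq_complex_def field_simps)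
  qed
  have "Inf L \<le> c"
    using \<open>c \<in> L\<close> lower by (intro cInf_lower) (auto simp: bdd_below_def)
  moreover have "0 < Inf L" \<comment> \<open>log is unspecified on nonpositive reals\<close>
    using \<open>c \<in> L\<close> lower trace(3) by (smt (verit) cInf_greatest divide_pos_pos empty_iff)
  ultimately have "log 2 (Inf L) \<le> log 2 c" by simp
  moreover have "L \<noteq> {}" using \<open>c \<in> L\<close> by auto
  ultimately show ?thesis by (simp add: Dmax_def L_def)
qed

lemma Dmax_ge_log:
  fixes c :: real
  assumes "0 < c" "\<And>l. psd n (of_real l \<cdot>\<^sub>m \<sigma> - \<rho>) \<Longrightarrow> c \<le> l"
  shows "ereal (log 2 c) \<le> Dmax n \<rho> \<sigma>"
proof -
  define L where "L = {l::real. psd n (of_real l \<cdot>\<^sub>m \<sigma> - \<rho>)}"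
  show ?thesis
  proof (cases "L = {}")
    case False
    then have "c \<le> Inf L" using assms(2) by (intro cInf_greatest) (auto simp: L_def)
    then show ?thesis using False assms(1) by (simp add: Dmax_def L_def[symmetric])
  qed (simp add: Dmax_def L_def[symmetric])
qed

lemma cond_min_entropy_ge:
  assumes Q: "channel dB Q"
    and bound: "\<And>r \<rho>. density (r * (dA * dB)) \<rho> \<Longrightarrow>
      Dmax (r * (dA * dB)) (map_tensor (\<lambda>Y. Y) N r (dA * dB) \<rho>)
        (map_tensor (\<lambda>Y. Y) (map_tensor (repl_id dA) Q dA dB) r (dA * dB) \<rho>) \<le> x"
  shows "- x \<le> cond_min_entropy dA dB N"
proof -
  have "Dmax_ch (dA * dB) N (map_tensor (repl_id dA) Q dA dB) \<le> x"
    unfolding Dmax_ch_def using bound by (intro SUP_least) auto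
  then have "(INF Q\<in>{Q. channel dB Q}. Dmax_ch (dA * dB) N (map_tensor (repl_id dA) Q dA dB)) \<le> x"
    using Q by (intro INF_lower2) auto
  then show ?thesis
    unfolding cond_min_entropy_def by (simp add: ereal_uminus_le_reorder)
qed

lemma cond_min_entropy_le:
  assumes \<rho>: "density (r * (dA * dB)) \<rho>"
    and bound: "\<And>Q. channel dB Q \<Longrightarrow>
      x \<le> Dmax (r * (dA * dB)) (map_tensor (\<lambda>Y. Y) N r (dA * dB) \<rho>)
        (map_tensor (\<lambda>Y. Y) (map_tensor (repl_id dA) Q dA dB) r (dA * dB) \<rho>)"
  shows "cond_min_entropy dA dB N \<le> - x"
proof -
  have "x \<le> Dmax_ch (dA * dB) N (map_tensor (repl_id dA) Q dA dB)" if "channel dB Q" for Q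
    unfolding Dmax_ch_def using \<rho> bound[OF that] by (intro SUP_upper2[where i = "(r, \<rho>)"]) auto
  then have "x \<le> (INF Q\<in>{Q. channel dB Q}. Dmax_ch (dA * dB) N (map_tensor (repl_id dA) Q dA dB))"
    by (intro INF_greatest) auto
  then show ?thesis
    unfolding cond_min_entropy_def by (simp add: ereal_minus_le_minus)
qed

section \<open>The maximally entangled state and Choi matrices\<close>

text \<open>c |\<Phi>\<rangle>\<langle>\<Phi>| for the unnormalised maximally entangled vector \<Phi> = \<Sum>a<m. |a\<rangle>|a\<rangle>.\<close>

definition max_entangled :: "nat \<Rightarrow> real \<Rightarrow> complex mat" where
  "max_entangled m c =
     mat (m * m) (m * m) (\<lambda>(i, j). if i div m = i mod m \<and> j div m = j mod m then of_real c else 0)"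

lemma max_entangled_carrier: "max_entangled m c \<in> carrier_mat (m * m) (m * m)"
  unfolding max_entangled_def by auto

lemma qform_max_entangled:
  "qform {..<m * m} (entries (max_entangled m c)) v = of_real (c * (cmod (\<Sum>a<m. v (a * m + a)))\<^sup>2)"
proof -
  define S where "S = (\<Sum>i<m * m. if i div m = i mod m then v i else 0)"
  have "qform {..<m * m} (entries (max_entangled m c)) v
      = (\<Sum>i<m * m. \<Sum>j<m * m. of_real c * (cnj (if i div m = i mod m then v i else 0)
          * (if j div m = j mod m then v j else 0)))"
    unfolding qform_def entries_def max_entangled_def by (intro sum.cong refl) auto
  also have "\<dots> = of_real c * ((\<Sum>i<m * m. cnj (if i div m = i mod m then v i else 0))
      * (\<Sum>j<m * m. if j div m = j mod m then v j else 0))"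
    unfolding sum_product by (simp only: sum_distrib_left)
  also have "\<dots> = of_real c * (cnj S * S)"
    unfolding S_def by (simp add: cnj_sum)
  finally have "qform {..<m * m} (entries (max_entangled m c)) v = of_real c * (cnj S * S)" .
  moreover have "S = (\<Sum>a<m. v (a * m + a))"
    unfolding S_def sum_lessThan_mult by (simp add: if_distrib cong: if_cong)
  moreover have "cnj S * S = of_real ((cmod S)\<^sup>2)"
    by (metis complex_norm_square mult.commute of_real_power)
  ultimately show ?thesis by simp
qed

lemma psd_max_entangled: "0 \<le> c \<Longrightarrow> psd (m * m) (max_entangled m c)"
  by (simp add: psd_iff_psd_form psd_form_def max_entangled_carrier qform_max_entangled
      less_eq_complex_def)

lemma density_max_entangled: "0 < m \<Longrightarrow> density (m * m) (max_entangled m (1 / real m))"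
proof -
  assume m: "0 < m"
  have "mtrace (max_entangled m (1 / real m)) = (\<Sum>a<m. \<Sum>x<m. if a = x then of_real (1 / real m) else 0)"
    unfolding mtrace_def max_entangled_def by (simp add: sum_lessThan_mult)
  also have "\<dots> = 1" using m by simp
  finally show ?thesis
    by (simp add: density_def psd_max_entangled)
qed

lemma block_max_entangled_index:
  "a < m \<Longrightarrow> a' < m \<Longrightarrow> x < m \<Longrightarrow> y < m \<Longrightarrow>
    block m (max_entangled m c) a a' $$ (x, y) = (if x = a \<and> y = a' then of_real c else 0)"
  using mult_add_less_mult[of a m x m] mult_add_less_mult[of a' m y m]
  by (auto simp: block_index max_entangled_def)

definition choi :: "nat \<Rightarrow> (complex mat \<Rightarrow> complex mat) \<Rightarrow> complex mat" where
  "choi d Q = map_tensor (\<lambda>Y. Y) Q d d (max_entangled d 1)"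

lemma psd_choi: "channel d Q \<Longrightarrow> psd (d * d) (choi d Q)"
  unfolding channel_def choi_def by (simp add: psd_max_entangled)

lemma choi_index:
  assumes Q: "lin_map d Q" and kl: "k < d * d" "l < d * d"
  shows "choi d Q $$ (k, l) = Q (eunit d (k div d) (l div d)) $$ (k mod d, l mod d)"
proof -
  have "block d (max_entangled d 1) a a' = eunit d a a'" if "a < d" "a' < d" for a a'
  proof (rule eq_matI)
    fix i j assume "i < dim_row (eunit d a a')" "j < dim_col (eunit d a a')"
    then show "block d (max_entangled d 1) a a' $$ (i, j) = eunit d a a' $$ (i, j)"
      using that by (simp add: block_max_entangled_index eunit_index eunit_def)
  qed (auto simp: block_def eunit_def)
  moreover have "k div d < d" "l div d < d"
    using kl by (auto intro: less_mult_imp_div_less)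
  moreover have "Q Y \<in> carrier_mat d d" if "Y \<in> carrier_mat d d" for Y
    using Q that by (simp add: lin_map_def)
  moreover have "choi d Q $$ (k, l) = Q (block d (max_entangled d 1) (k div d) (l div d)) $$ (k mod d, l mod d)"
    unfolding choi_def using kl Q by (intro map_tensor_id_index) (simp_all add: lin_map_def block_carrier)
  ultimately show ?thesis by simp
qed

lemma trace_choi:
  assumes Q: "channel d Q"
  shows "(\<Sum>k<d * d. choi d Q $$ (k, k)) = of_nat d"
proof -
  have L: "lin_map d Q" and T: "\<And>X. X \<in> carrier_mat d d \<Longrightarrow> mtrace (Q X) = mtrace X"
    using Q unfolding channel_def by auto
  have "(\<Sum>k<d * d. choi d Q $$ (k, k)) = (\<Sum>a<d. \<Sum>x<d. Q (eunit d a a) $$ (x, x))"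
    unfolding sum_lessThan_mult using mult_add_less_mult
    by (intro sum.cong refl) (simp add: choi_index[OF L])
  also have "\<dots> = (\<Sum>a<d. mtrace (Q (eunit d a a)))"
  proof -
    have "dim_row (Q (eunit d a a)) = d" for a
      using L eunit_carrier unfolding lin_map_def by blast
    then show ?thesis by (simp add: mtrace_def)
  qed
  also have "\<dots> = of_nat d"
    by (simp add: T eunit_carrier mtrace_eunit)
  finally show ?thesis .
qed

text \<open>Index of the basis vector |g, k div dB\<rangle> \<otimes> |h, k mod dB\<rangle> of (A B) \<otimes> (A B): the first factor is a
  reference copy of A B, and k runs over the basis of the two copies of B on which the Choi
  matrix lives.\<close>

definition ent_index :: "nat \<Rightarrow> nat \<Rightarrow> (nat \<times> nat) \<times> nat \<Rightarrow> nat" where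
  "ent_index dA dB = (\<lambda>((g, h), k). (g * dB + k div dB) * (dA * dB) + (h * dB + k mod dB))"

lemma ent_index_div_mod:
  assumes "g < dA" "h < dA" "k < dB * dB"
  shows "ent_index dA dB ((g, h), k) div (dA * dB) = g * dB + k div dB"
    "ent_index dA dB ((g, h), k) mod (dA * dB) = h * dB + k mod dB"
proof -
  have "0 < dB" using assms(3) by (cases dB) auto
  then have "h * dB + k mod dB < dA * dB"
    using assms(2) by (intro mult_add_less_mult) auto
  then show "ent_index dA dB ((g, h), k) div (dA * dB) = g * dB + k div dB"
    "ent_index dA dB ((g, h), k) mod (dA * dB) = h * dB + k mod dB"
    by (simp_all add: ent_index_def)
qed

lemma ent_index_less:
  assumes "g < dA" "h < dA" "k < dB * dB"
  shows "ent_index dA dB ((g, h), k) < (dA * dB) * (dA * dB)"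
proof -
  have "0 < dB" using assms(3) by (cases dB) auto
  then have "g * dB + k div dB < dA * dB" "h * dB + k mod dB < dA * dB"
    using assms by (auto intro!: mult_add_less_mult less_mult_imp_div_less)
  then show ?thesis by (simp add: ent_index_def mult_add_less_mult)
qed

lemma inj_on_ent_index: "inj_on (ent_index dA dB) (({..<dA} \<times> {..<dA}) \<times> {..<dB * dB})"
proof (rule inj_onI)
  fix a a' assume "a \<in> ({..<dA} \<times> {..<dA}) \<times> {..<dB * dB}" "a' \<in> ({..<dA} \<times> {..<dA}) \<times> {..<dB * dB}"
    and eq: "ent_index dA dB a = ent_index dA dB a'"
  then obtain g h k g' h' k' where aa: "a = ((g, h), k)" "a' = ((g', h'), k')"
    and gh: "g < dA" "h < dA" "k < dB * dB" and gh': "g' < dA" "h' < dA" "k' < dB * dB"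
    by auto
  have "0 < dB" using gh(3) by (cases dB) auto
  then have lt: "k div dB < dB" "k' div dB < dB" "k mod dB < dB" "k' mod dB < dB"
    using gh(3) gh'(3) by (auto intro: less_mult_imp_div_less)
  have "g * dB + k div dB = g' * dB + k' div dB" "h * dB + k mod dB = h' * dB + k' mod dB"
    using eq ent_index_div_mod[OF gh] ent_index_div_mod[OF gh'] unfolding aa by metis+
  then have "g = g'" "h = h'" "k div dB = k' div dB" "k mod dB = k' mod dB"
    using lt by (simp_all add: mult_add_eq_iff)
  then show "a = a'"
    using nat_eq_iff_div_mod_eq[of k k' dB] unfolding aa by simp
qed

lemma bij_ent_index:
  "bij_betw (ent_index dA dB) (({..<dA} \<times> {..<dA}) \<times> {..<dB * dB}) {..<(dA * dB) * (dA * dB)}"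
proof (rule bij_betw_imageI[OF inj_on_ent_index])
  let ?A = "({..<dA} \<times> {..<dA}) \<times> {..<dB * dB}"
  have "ent_index dA dB ` ?A \<subseteq> {..<(dA * dB) * (dA * dB)}"
    using ent_index_less by force
  moreover have "card (ent_index dA dB ` ?A) = card {..<(dA * dB) * (dA * dB)}"
    using card_image[OF inj_on_ent_index] by (simp add: card_cartesian_product mult_ac)
  ultimately show "ent_index dA dB ` ?A = {..<(dA * dB) * (dA * dB)}"
    by (intro card_subset_eq) auto
qed

lemma block_block_max_entangled:
  assumes "g < dA" "g' < dA" "e < dA" "x < dB" "x' < dB"
  shows "block dB (block (dA * dB) (max_entangled (dA * dB) c) (g * dB + x) (g' * dB + x')) e e
    = of_real (if g = e \<and> g' = e then c else 0) \<cdot>\<^sub>m eunit dB x x'"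
proof (rule eq_matI)
  fix s t assume "s < dim_row (of_real (if g = e \<and> g' = e then c else 0) \<cdot>\<^sub>m eunit dB x x')"
    "t < dim_col (of_real (if g = e \<and> g' = e then c else 0) \<cdot>\<^sub>m eunit dB x x')"
  then have st: "s < dB" "t < dB" by (simp_all add: eunit_def)
  have "e * dB + s = g * dB + x \<longleftrightarrow> e = g \<and> s = x" "e * dB + t = g' * dB + x' \<longleftrightarrow> e = g' \<and> t = x'"
    using st assms by (simp_all add: mult_add_eq_iff)
  moreover have "e * dB + s < dA * dB" "e * dB + t < dA * dB" "g * dB + x < dA * dB" "g' * dB + x' < dA * dB"
    using st assms by (auto intro: mult_add_less_mult)
  ultimately have "block (dA * dB) (max_entangled (dA * dB) c) (g * dB + x) (g' * dB + x') $$ (e * dB + s, e * dB + t)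
      = of_real (if g = e \<and> g' = e then c else 0) * (if s = x \<and> t = x' then 1 else 0)"
    by (subst block_max_entangled_index) auto
  then show "block dB (block (dA * dB) (max_entangled (dA * dB) c) (g * dB + x) (g' * dB + x')) e e $$ (s, t)
      = (of_real (if g = e \<and> g' = e then c else 0) \<cdot>\<^sub>m eunit dB x x') $$ (s, t)"
    using st by (simp add: block_index eunit_index eunit_def)
qed (simp_all add: block_def eunit_def)

lemma lin_map_block_block_max_entangled_index:
  assumes Q: "lin_map dB Q"
    and "g < dA" "g' < dA" "e < dA" "x < dB" "x' < dB" "p < dB" "q < dB"
  shows "Q (block dB (block (dA * dB) (max_entangled (dA * dB) c) (g * dB + x) (g' * dB + x')) e e) $$ (p, q)
    = (if e = g then (if g = g' then of_real c * Q (eunit dB x x') $$ (p, q) else 0) else 0)"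
proof -
  have "Q (eunit dB x x') \<in> carrier_mat dB dB"
    using Q eunit_carrier by (simp add: lin_map_def)
  then have "dim_row (Q (eunit dB x x')) = dB" "dim_col (Q (eunit dB x x')) = dB" by auto
  then show ?thesis
    using assms by (auto simp: block_block_max_entangled lin_map_smult[OF Q] eunit_carrier)
qed

lemma repl_tensor_max_entangled_index:
  assumes Q: "lin_map dB Q"
    and a: "a \<in> ({..<dA} \<times> {..<dA}) \<times> {..<dB * dB}" "a' \<in> ({..<dA} \<times> {..<dA}) \<times> {..<dB * dB}"
  shows "map_tensor (\<lambda>Y. Y) (map_tensor (repl_id dA) Q dA dB) (dA * dB) (dA * dB) (max_entangled (dA * dB) c)
      $$ (ent_index dA dB a, ent_index dA dB a')
    = (if fst a = fst a' then of_real c * choi dB Q $$ (snd a, snd a') else 0)"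
proof -
  obtain g h k g' h' k' where aa: "a = ((g, h), k)" "a' = ((g', h'), k')"
    and gh: "g < dA" "h < dA" "k < dB * dB" and gh': "g' < dA" "h' < dA" "k' < dB * dB"
    using a by auto
  let ?d = "dA * dB" and ?\<rho> = "max_entangled (dA * dB) c"
  have "0 < dB" using gh by (cases dB) auto
  then have k: "k div dB < dB" "k' div dB < dB" "k mod dB < dB" "k' mod dB < dB"
    using gh(3) gh'(3) by (auto intro: less_mult_imp_div_less)
  have QC: "Q Y \<in> carrier_mat dB dB" if "Y \<in> carrier_mat dB dB" for Y
    using Q that by (simp add: lin_map_def)
  have "map_tensor (\<lambda>Y. Y) (map_tensor (repl_id dA) Q dA dB) ?d ?d ?\<rho> $$ (ent_index dA dB a, ent_index dA dB a')
      = map_tensor (repl_id dA) Q dA dB (block ?d ?\<rho> (g * dB + k div dB) (g' * dB + k' div dB))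
          $$ (h * dB + k mod dB, h' * dB + k' mod dB)"
    using ent_index_less[OF gh] ent_index_less[OF gh'] unfolding aa
    by (simp add: map_tensor_id_index map_tensor_carrier ent_index_div_mod gh gh')
  also have "\<dots> = (if h = h' then (\<Sum>e<dA. Q (block dB (block ?d ?\<rho> (g * dB + k div dB) (g' * dB + k' div dB)) e e)
      $$ (k mod dB, k' mod dB)) else 0)"
    using gh gh' k by (subst map_tensor_repl_id_index) (auto intro: QC block_carrier mult_add_less_mult)
  also have "\<dots> = (if (g, h) = (g', h') then of_real c * choi dB Q $$ (k, k') else 0)"
    using gh gh' k by (simp add: lin_map_block_block_max_entangled_index[OF Q] choi_index[OF Q])
  finally show ?thesis unfolding aa by simp
qed

lemma qform_repl_tensor_max_entangled:
  assumes Q: "lin_map dB Q"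
  shows "qform {..<(dA * dB) * (dA * dB)}
      (entries (map_tensor (\<lambda>Y. Y) (map_tensor (repl_id dA) Q dA dB) (dA * dB) (dA * dB) (max_entangled (dA * dB) c))) v
    = of_real c * (\<Sum>p\<in>{..<dA} \<times> {..<dA}. qform {..<dB * dB} (entries (choi dB Q)) (\<lambda>k. v (ent_index dA dB (p, k))))"
proof -
  let ?A = "({..<dA} \<times> {..<dA}) \<times> {..<dB * dB}"
  have "qform {..<(dA * dB) * (dA * dB)}
      (entries (map_tensor (\<lambda>Y. Y) (map_tensor (repl_id dA) Q dA dB) (dA * dB) (dA * dB) (max_entangled (dA * dB) c))) v
    = qform ?A (\<lambda>(p, k) (p', k'). if p = p' then of_real c * entries (choi dB Q) k k' else 0) (\<lambda>a. v (ent_index dA dB a))"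
    by (subst qform_reindex[OF bij_ent_index], rule qform_cong_form)
      (auto simp: entries_def repl_tensor_max_entangled_index[OF Q])
  also have "\<dots> = of_real c * (\<Sum>p\<in>{..<dA} \<times> {..<dA}. qform {..<dB * dB} (entries (choi dB Q)) (\<lambda>k. v (ent_index dA dB (p, k))))"
    by (simp add: qform_block_diagonal qform_scale sum_distrib_left)
  finally show ?thesis .
qed

section \<open>Controlled unitaries\<close>

locale controlled_unitary =
  fixes dA dB :: nat and b :: "nat \<Rightarrow> complex vec" and U :: "nat \<Rightarrow> complex mat"
  assumes onb: "\<forall>i<dA. \<forall>j<dA. b i \<in> carrier_vec dA \<and> b i \<bullet>c b j = (if i = j then 1 else 0)"
    and unit: "\<forall>j<dA. unitary dB (U j)"
begin

abbreviation CU :: "complex mat" where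
  "CU \<equiv> ctrl_unitary dA dB b U"

lemma basis_carrier: "j < dA \<Longrightarrow> b j \<in> carrier_vec dA"
  using onb by blast

lemma unitary_U: "j < dA \<Longrightarrow> unitary dB (U j)"
  using unit by blast

lemma U_carrier: "j < dA \<Longrightarrow> U j \<in> carrier_mat dB dB"
  using unit by (simp add: unitary_def)

lemma basis_orthonormal:
  assumes "i < dA" "j < dA"
  shows "(\<Sum>c<dA. b i $ c * cnj (b j $ c)) = (if i = j then 1 else 0)"
proof -
  have "b i \<bullet>c b j = (\<Sum>c<dA. b i $ c * cnj (b j $ c))"
    using basis_carrier[OF assms(2)] by (simp add: scalar_prod_def atLeast0LessThan)
  then show ?thesis using onb assms by metis
qed

text \<open>An orthonormal family of dA vectors in dimension dA is a basis, so its rows are orthonormal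
  as well.\<close>

lemma basis_complete:
  assumes "c < dA" "c' < dA"
  shows "(\<Sum>j<dA. b j $ c * cnj (b j $ c')) = (if c = c' then 1 else 0)"
proof -
  define L where "L = mat dA dA (\<lambda>(j, c). cnj (b j $ c))"
  define R where "R = mat dA dA (\<lambda>(c, j). b j $ c)"
  have L: "L \<in> carrier_mat dA dA" and R: "R \<in> carrier_mat dA dA"
    unfolding L_def R_def by auto
  have "L * R = 1\<^sub>m dA"
  proof (rule eq_matI)
    fix j i assume "j < dim_row (1\<^sub>m dA :: complex mat)" "i < dim_col (1\<^sub>m dA :: complex mat)"
    then have ji: "j < dA" "i < dA" by auto
    then have "(L * R) $$ (j, i) = (\<Sum>c<dA. b i $ c * cnj (b j $ c))"
      unfolding L_def R_def by (simp add: scalar_prod_def atLeast0LessThan row_def col_def mult.commute)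
    then show "(L * R) $$ (j, i) = 1\<^sub>m dA $$ (j, i)"
      using ji basis_orthonormal[OF ji(2,1)] by auto
  qed (use L R in auto)
  then have "R * L = 1\<^sub>m dA"
    using mat_mult_left_right_inverse[OF L R] by blast
  moreover have "(R * L) $$ (c, c') = (\<Sum>j<dA. b j $ c * cnj (b j $ c'))"
    using assms unfolding L_def R_def by (simp add: scalar_prod_def atLeast0LessThan row_def col_def)
  ultimately show ?thesis using assms by simp
qed

lemma CU_carrier: "CU \<in> carrier_mat (dA * dB) (dA * dB)"
  unfolding ctrl_unitary_def by (rule msum_carrier)

lemma CU_index:
  "x < dA * dB \<Longrightarrow> y < dA * dB \<Longrightarrow>
    CU $$ (x, y) = (\<Sum>j<dA. b j $ (x div dB) * cnj (b j $ (y div dB)) * U j $$ (x mod dB, y mod dB))"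
  by (rule ctrl_unitary_index) (auto intro: basis_carrier U_carrier)

lemma CU_adj_mult_index:
  assumes st: "s < dA * dB" "t < dA * dB"
  shows "(\<Sum>p<dA * dB. cnj (CU $$ (p, s)) * CU $$ (p, t)) = (if s = t then 1 else 0)"
proof -
  have dB: "0 < dB" using st by (cases dB) auto
  have div: "s div dB < dA" "t div dB < dA" using st by (auto intro: less_mult_imp_div_less)
  have mod: "s mod dB < dB" "t mod dB < dB" using dB by auto
  define T where "T c x j j' = (cnj (b j $ c) * b j' $ c) * (cnj (U j $$ (x, s mod dB)) * U j' $$ (x, t mod dB))
      * (b j $ (s div dB) * cnj (b j' $ (t div dB)))" for c x j j'
  have "(\<Sum>p<dA * dB. cnj (CU $$ (p, s)) * CU $$ (p, t)) = (\<Sum>c<dA. \<Sum>x<dB. \<Sum>j<dA. \<Sum>j'<dA. T c x j j')"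
    unfolding sum_lessThan_mult T_def
    using st by (intro sum.cong refl)
      (simp add: CU_index mult_add_less_mult cnj_sum sum_product mult_ac, rule sum.swap)
  also have "\<dots> = (\<Sum>j<dA. \<Sum>j'<dA. \<Sum>c<dA. \<Sum>x<dB. T c x j j')"
    by (rule sum_swap_pairs)
  also have "\<dots> = (\<Sum>j<dA. \<Sum>j'<dA. (\<Sum>c<dA. cnj (b j $ c) * b j' $ c)
      * (\<Sum>x<dB. cnj (U j $$ (x, s mod dB)) * U j' $$ (x, t mod dB)) * (b j $ (s div dB) * cnj (b j' $ (t div dB))))"
    unfolding T_def
    by (simp add: sum_product sum_distrib_left sum_distrib_right mult_ac,
        rule sum.cong[OF refl], rule sum.cong[OF refl], rule sum.swap)
  also have "\<dots> = (\<Sum>j<dA. (if s mod dB = t mod dB then 1 else 0) * (b j $ (s div dB) * cnj (b j $ (t div dB))))"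
  proof (rule sum.cong[OF refl])
    fix j assume j: "j \<in> {..<dA}"
    have "(\<Sum>c<dA. cnj (b j $ c) * b j' $ c) = (if j = j' then 1 else 0)" if "j' < dA" for j'
      using basis_orthonormal[OF that, of j] j by (simp add: mult.commute)
    then show "(\<Sum>j'<dA. (\<Sum>c<dA. cnj (b j $ c) * b j' $ c)
        * (\<Sum>x<dB. cnj (U j $$ (x, s mod dB)) * U j' $$ (x, t mod dB)) * (b j $ (s div dB) * cnj (b j' $ (t div dB))))
      = (if s mod dB = t mod dB then 1 else 0) * (b j $ (s div dB) * cnj (b j $ (t div dB)))"
      using j mod by (simp add: unitary_adj_mult_index[OF unitary_U] if_distrib[of "\<lambda>z. z * _"] cong: if_cong)
  qed
  also have "\<dots> = (if s mod dB = t mod dB then 1 else 0) * (if s div dB = t div dB then 1 else 0)"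
    using div by (simp add: sum_distrib_left[symmetric] basis_complete)
  also have "\<dots> = (if s = t then 1 else 0)"
    using nat_eq_iff_div_mod_eq[of s t dB] by simp
  finally show ?thesis .
qed

abbreviation triples :: "(nat \<times> nat \<times> nat) set" where
  "triples \<equiv> {..<dA} \<times> {..<dA} \<times> {..<dA}"

definition ctrl_coeff :: "nat \<times> nat \<times> nat \<Rightarrow> complex" where
  "ctrl_coeff = (\<lambda>(c, e, j). b j $ c * cnj (b j $ e))"

definition repl_mixture_op :: "nat \<times> nat \<times> nat \<Rightarrow> nat \<Rightarrow> nat \<Rightarrow> complex" where
  "repl_mixture_op = (\<lambda>(c, e, j). eunit_kron dB c e (entries (U j)))"

lemma kraus_form_ctrl_channel:
  "kraus_form (dA * dB) (ctrl_channel dA dB b U) {()} (\<lambda>_. 1) (\<lambda>_. entries CU)"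
proof -
  have "ctrl_channel dA dB b U = (\<lambda>X. CU * X * adj CU)"
    by (simp add: fun_eq_iff ctrl_channel_def)
  then show ?thesis using kraus_form_conj[OF CU_carrier] by simp
qed

lemma kraus_complete_ctrl_channel: "kraus_complete (dA * dB) {()} (\<lambda>_. 1) (\<lambda>_. entries CU) 1"
  by (simp add: kraus_complete_def entries_def CU_adj_mult_index)

lemma kraus_form_repl_mixture:
  "kraus_form (dA * dB) (map_tensor (repl_id dA) (unitary_mixture dA dB U) dA dB) triples (\<lambda>_. 1 / real dA) repl_mixture_op"
  using kraus_form_map_tensor_repl_id[OF kraus_form_unitary_mixture[where n = dA and d = dB and U = U], where m = dA]
  by (simp add: repl_mixture_op_def case_prod_unfold)

lemma kraus_complete_repl_mixture:
  "0 < dA \<Longrightarrow> kraus_complete (dA * dB) triples (\<lambda>_. 1 / real dA) repl_mixture_op (of_nat dA)"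
  using kraus_complete_map_tensor_repl_id[OF kraus_complete_unitary_mixture[where n = dA and d = dB and U = U], where m = dA] unitary_U
  by (simp add: repl_mixture_op_def case_prod_unfold)

lemma CU_lincomb:
  assumes "x < dA * dB" "y < dA * dB"
  shows "CU $$ (x, y) = (\<Sum>t\<in>triples. ctrl_coeff t * repl_mixture_op t x y)"
proof -
  have div: "x div dB < dA" "y div dB < dA" using assms by (auto intro: less_mult_imp_div_less)
  have "(\<Sum>t\<in>triples. ctrl_coeff t * repl_mixture_op t x y) = (\<Sum>c<dA. \<Sum>e<dA. \<Sum>j<dA. ctrl_coeff (c, e, j) * repl_mixture_op (c, e, j) x y)"
    by (simp add: sum.cartesian_product')
  also have "\<dots> = (\<Sum>j<dA. \<Sum>c<dA. \<Sum>e<dA. if c = x div dB \<and> e = y div dB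
      then b j $ c * cnj (b j $ e) * U j $$ (x mod dB, y mod dB) else 0)"
    unfolding ctrl_coeff_def repl_mixture_op_def eunit_kron_def entries_def
    by (subst sum.swap, rule sum.cong[OF refl], subst sum.swap) (auto intro!: sum.cong)
  also have "\<dots> = CU $$ (x, y)"
    using div assms by (simp add: CU_index sum_if_eq_pair)
  finally show ?thesis by simp
qed

lemma sum_ctrl_coeff_norm: "(\<Sum>t\<in>triples. ctrl_coeff t * cnj (ctrl_coeff t)) = of_nat dA"
proof -
  have "(\<Sum>t\<in>triples. ctrl_coeff t * cnj (ctrl_coeff t))
      = (\<Sum>c<dA. \<Sum>e<dA. \<Sum>j<dA. (b j $ c * cnj (b j $ c)) * (b j $ e * cnj (b j $ e)))"
    by (simp add: sum.cartesian_product' ctrl_coeff_def mult_ac)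
  also have "\<dots> = (\<Sum>j<dA. \<Sum>c<dA. \<Sum>e<dA. (b j $ c * cnj (b j $ c)) * (b j $ e * cnj (b j $ e)))"
    by (subst sum.swap, rule sum.cong[OF refl], rule sum.swap)
  also have "\<dots> = (\<Sum>j<dA. (\<Sum>c<dA. b j $ c * cnj (b j $ c)) * (\<Sum>e<dA. b j $ e * cnj (b j $ e)))"
    by (simp add: sum_product)
  also have "\<dots> = of_nat dA"
    by (simp add: basis_orthonormal)
  finally show ?thesis .
qed

lemma qform_ctrl_channel_le:
  assumes dA: "0 < dA" and \<rho>: "psd (r * (dA * dB)) \<rho>"
  shows "qform {..<r * (dA * dB)} (entries (map_tensor (\<lambda>Y. Y) (ctrl_channel dA dB b U) r (dA * dB) \<rho>)) v
    \<le> of_real ((real dA)\<^sup>2)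
      * qform {..<r * (dA * dB)} (entries (map_tensor (\<lambda>Y. Y) (map_tensor (repl_id dA) (unitary_mixture dA dB U) dA dB) r (dA * dB) \<rho>)) v"
proof -
  let ?n = "r * (dA * dB)" and ?G = "entries \<rho>"
  define w where "w t = adj_apply {..<?n} (id_kron (dA * dB) (repl_mixture_op t)) v" for t
  have carrier: "\<rho> \<in> carrier_mat ?n ?n" and G: "psd_form {..<?n} ?G"
    using \<rho> by (auto simp: psd_iff_psd_form)
  have lincomb: "id_kron (dA * dB) (entries CU) i k = (\<Sum>t\<in>triples. ctrl_coeff t * id_kron (dA * dB) (repl_mixture_op t) i k)"
    if "i < ?n" for i k
  proof -
    have "0 < dA * dB" using that by (cases "dA * dB") auto
    then show ?thesis
      by (simp add: id_kron_def entries_def CU_lincomb if_distrib[of "\<lambda>z. _ * z"] cong: if_cong)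
  qed
  have "qform {..<?n} (entries (map_tensor (\<lambda>Y. Y) (ctrl_channel dA dB b U) r (dA * dB) \<rho>)) v
      = qform {..<?n} ?G (adj_apply {..<?n} (id_kron (dA * dB) (entries CU)) v)"
    using qform_kraus[OF kraus_form_map_tensor_id[OF kraus_form_ctrl_channel] carrier] by simp
  also have "\<dots> = qform {..<?n} ?G (\<lambda>k. \<Sum>t\<in>triples. cnj (ctrl_coeff t) * w t k)"
    unfolding w_def adj_apply_lincomb[symmetric] by (intro qform_cong) (simp add: adj_apply_def lincomb)
  also have "\<dots> \<le> of_real (real dA) * (\<Sum>t\<in>triples. qform {..<?n} ?G (w t))"
    using dA G by (intro qform_lincomb_le) (simp_all add: sum_ctrl_coeff_norm)
  also have "\<dots> = of_real ((real dA)\<^sup>2) * (\<Sum>t\<in>triples. of_real (1 / real dA) * qform {..<?n} ?G (w t))"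
    using dA by (simp add: sum_distrib_left power2_eq_square)
  also have "\<dots> = of_real ((real dA)\<^sup>2)
      * qform {..<?n} (entries (map_tensor (\<lambda>Y. Y) (map_tensor (repl_id dA) (unitary_mixture dA dB U) dA dB) r (dA * dB) \<rho>)) v"
    using qform_kraus[OF kraus_form_map_tensor_id[OF kraus_form_repl_mixture] carrier] by (simp add: w_def)
  finally show ?thesis .
qed

lemma Dmax_ctrl_channel_le:
  assumes dA: "0 < dA" and \<rho>: "density (r * (dA * dB)) \<rho>"
  shows "Dmax (r * (dA * dB)) (map_tensor (\<lambda>Y. Y) (ctrl_channel dA dB b U) r (dA * dB) \<rho>)
      (map_tensor (\<lambda>Y. Y) (map_tensor (repl_id dA) (unitary_mixture dA dB U) dA dB) r (dA * dB) \<rho>)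
    \<le> ereal (log 2 ((real dA)\<^sup>2))"
proof (rule Dmax_le_log[where \<kappa> = "real dA"])
  let ?n = "r * (dA * dB)"
  let ?\<tau> = "map_tensor (\<lambda>Y. Y) (ctrl_channel dA dB b U) r (dA * dB) \<rho>"
    and ?\<sigma> = "map_tensor (\<lambda>Y. Y) (map_tensor (repl_id dA) (unitary_mixture dA dB U) dA dB) r (dA * dB) \<rho>"
  have psd: "psd ?n \<rho>" and carrier: "\<rho> \<in> carrier_mat ?n ?n" and trace: "mtrace \<rho> = 1"
    using \<rho> by (auto simp: density_def psd_def)
  show "?\<tau> \<in> carrier_mat ?n ?n" "?\<sigma> \<in> carrier_mat ?n ?n"
    by (simp_all add: map_tensor_carrier)
  show "psd ?n (of_real ((real dA)\<^sup>2) \<cdot>\<^sub>m ?\<sigma> - ?\<tau>)"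
    using qform_ctrl_channel_le[OF dA psd]
    by (simp add: psd_iff_psd_form psd_form_def qform_smult_minus map_tensor_carrier minus_carrier_mat)
  show "mtrace ?\<tau> = 1"
    using mtrace_kraus[OF kraus_form_map_tensor_id[OF kraus_form_ctrl_channel]
        kraus_complete_id_kron[OF kraus_complete_ctrl_channel] carrier] trace by simp
  show "mtrace ?\<sigma> = of_real (real dA)"
    using mtrace_kraus[OF kraus_form_map_tensor_id[OF kraus_form_repl_mixture]
        kraus_complete_id_kron[OF kraus_complete_repl_mixture[OF dA]] carrier] trace by simp
qed (use dA in simp)

lemma cond_min_entropy_ctrl_channel_ge:
  assumes "0 < dA"
  shows "- ereal (log 2 ((real dA)\<^sup>2)) \<le> cond_min_entropy dA dB (ctrl_channel dA dB b U)"
  using cond_min_entropy_ge[OF channel_unitary_mixture[OF assms unitary_U] Dmax_ctrl_channel_le[OF assms]] .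

text \<open>The vectorisations |CU\<rangle>\<rangle> and |U j\<rangle>\<rangle>, with the input index as the more significant one.\<close>

definition vec_CU :: "nat \<Rightarrow> complex" where
  "vec_CU i = CU $$ (i mod (dA * dB), i div (dA * dB))"

definition vec_U :: "nat \<Rightarrow> nat \<Rightarrow> complex" where
  "vec_U j k = U j $$ (k mod dB, k div dB)"

abbreviation max_ent_AB :: "complex mat" where
  "max_ent_AB \<equiv> max_entangled (dA * dB) (1 / real (dA * dB))"

lemma qform_ctrl_channel_max_ent:
  assumes "0 < dA * dB"
  shows "qform {..<(dA * dB) * (dA * dB)}
      (entries (map_tensor (\<lambda>Y. Y) (ctrl_channel dA dB b U) (dA * dB) (dA * dB) max_ent_AB)) vec_CU
    = of_nat (dA * dB)"
proof -
  let ?d = "dA * dB"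
  have column: "adj_apply {..<?d * ?d} (id_kron ?d (entries CU)) vec_CU (a * ?d + a) = 1" if "a < ?d" for a
  proof -
    have "adj_apply {..<?d * ?d} (id_kron ?d (entries CU)) vec_CU (a * ?d + a)
        = (\<Sum>i<?d * ?d. if i div ?d = a then cnj (CU $$ (i mod ?d, a)) * CU $$ (i mod ?d, i div ?d) else 0)"
      unfolding adj_apply_def id_kron_def entries_def vec_CU_def using that by (intro sum.cong refl) auto
    also have "\<dots> = (\<Sum>x<?d. cnj (CU $$ (x, a)) * CU $$ (x, a))"
      using that by (subst sum_lessThan_mult_div_eq) auto
    also have "\<dots> = 1"
      using that by (simp add: CU_adj_mult_index)
    finally show ?thesis .
  qed
  have "qform {..<?d * ?d} (entries (map_tensor (\<lambda>Y. Y) (ctrl_channel dA dB b U) ?d ?d max_ent_AB)) vec_CU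
      = qform {..<?d * ?d} (entries max_ent_AB) (adj_apply {..<?d * ?d} (id_kron ?d (entries CU)) vec_CU)"
    using qform_kraus[OF kraus_form_map_tensor_id[OF kraus_form_ctrl_channel] max_entangled_carrier] by simp
  also have "\<dots> = of_real (1 / real ?d * (real ?d)\<^sup>2)"
    by (simp add: qform_max_entangled column norm_mult)
  also have "\<dots> = of_nat ?d"
    using assms by (simp add: power2_eq_square)
  finally show ?thesis .
qed

lemma vec_CU_ent_index:
  assumes "g < dA" "h < dA" "k < dB * dB"
  shows "vec_CU (ent_index dA dB ((g, h), k)) = (\<Sum>j<dA. (b j $ h * cnj (b j $ g)) * vec_U j k)"
proof -
  have "0 < dB" using assms(3) by (cases dB) auto
  then have k: "k div dB < dB" "k mod dB < dB"
    using assms(3) by (auto intro: less_mult_imp_div_less)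
  then have lt: "h * dB + k mod dB < dA * dB" "g * dB + k div dB < dA * dB"
    using assms by (auto intro: mult_add_less_mult)
  have "vec_CU (ent_index dA dB ((g, h), k)) = CU $$ (h * dB + k mod dB, g * dB + k div dB)"
    using assms by (simp add: vec_CU_def ent_index_div_mod)
  also have "\<dots> = (\<Sum>j<dA. b j $ h * cnj (b j $ g) * U j $$ (k mod dB, k div dB))"
    using lt k by (simp add: CU_index)
  finally show ?thesis by (simp add: vec_U_def)
qed

lemma qform_repl_tensor_max_ent:
  assumes Q: "lin_map dB Q"
  shows "qform {..<(dA * dB) * (dA * dB)}
      (entries (map_tensor (\<lambda>Y. Y) (map_tensor (repl_id dA) Q dA dB) (dA * dB) (dA * dB) max_ent_AB)) vec_CU
    = of_real (1 / real (dA * dB)) * (\<Sum>j<dA. qform {..<dB * dB} (entries (choi dB Q)) (vec_U j))"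
proof -
  define \<beta> where "\<beta> = (\<lambda>(g, h) j. b j $ h * cnj (b j $ g))"
  have orth: "(\<Sum>p\<in>{..<dA} \<times> {..<dA}. cnj (\<beta> p j) * \<beta> p j') = (if j = j' then 1 else 0)"
    if "j < dA" "j' < dA" for j j'
  proof -
    have "(\<Sum>p\<in>{..<dA} \<times> {..<dA}. cnj (\<beta> p j) * \<beta> p j')
        = (\<Sum>g<dA. b j $ g * cnj (b j' $ g)) * (\<Sum>h<dA. b j' $ h * cnj (b j $ h))"
      by (simp add: \<beta>_def sum.cartesian_product' sum_product mult_ac, rule sum.swap)
    then show ?thesis using that by (simp add: basis_orthonormal)
  qed
  have "qform {..<(dA * dB) * (dA * dB)}
      (entries (map_tensor (\<lambda>Y. Y) (map_tensor (repl_id dA) Q dA dB) (dA * dB) (dA * dB) max_ent_AB)) vec_CU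
    = of_real (1 / real (dA * dB)) * (\<Sum>p\<in>{..<dA} \<times> {..<dA}.
        qform {..<dB * dB} (entries (choi dB Q)) (\<lambda>k. \<Sum>j<dA. \<beta> p j * vec_U j k))"
    unfolding qform_repl_tensor_max_entangled[OF Q]
    by (intro arg_cong[where f = "\<lambda>z. _ * z"] sum.cong refl qform_cong)
      (auto simp: \<beta>_def vec_CU_ent_index)
  also have "\<dots> = of_real (1 / real (dA * dB)) * (\<Sum>j<dA. qform {..<dB * dB} (entries (choi dB Q)) (vec_U j))"
    using orth by (intro arg_cong[where f = "\<lambda>z. _ * z"] sum_qform_orthonormal_mix) auto
  finally show ?thesis .
qed

lemma vec_U_orthogonal:
  assumes orth: "\<forall>i<dA. \<forall>j<dA. i \<noteq> j \<longrightarrow> mtrace (adj (U i) * U j) = 0"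
    and j: "j < dA" "j' < dA"
  shows "(\<Sum>k<dB * dB. cnj (vec_U j k) * vec_U j' k) = (if j = j' then of_real (real dB) else 0)"
proof -
  have "(\<Sum>k<dB * dB. cnj (vec_U j k) * vec_U j' k) = (\<Sum>s<dB. \<Sum>q<dB. cnj (U j $$ (q, s)) * U j' $$ (q, s))"
    unfolding vec_U_def sum_lessThan_mult by simp
  also have "\<dots> = mtrace (adj (U j) * U j')"
    using U_carrier[OF j(1)] U_carrier[OF j(2)] unfolding mtrace_def
    by (intro sum.cong) (auto simp: scalar_prod_def atLeast0LessThan row_def col_def)
  moreover have "mtrace (adj (U j) * U j) = of_nat dB"
  proof -
    have "adj (U j) * U j = 1\<^sub>m dB" using unitary_U[OF j(1)] by (simp add: unitary_def)
    then show ?thesis by (simp add: mtrace_def)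
  qed
  ultimately show ?thesis
    using orth j by auto
qed

lemma sum_qform_choi_vec_U_le:
  assumes dB: "0 < dB" and Q: "channel dB Q"
    and orth: "\<forall>i<dA. \<forall>j<dA. i \<noteq> j \<longrightarrow> mtrace (adj (U i) * U j) = 0"
  shows "(\<Sum>j<dA. qform {..<dB * dB} (entries (choi dB Q)) (vec_U j)) \<le> of_real (real dB * real dB)"
proof -
  have "psd_form {..<dB * dB} (entries (choi dB Q))"
    using psd_choi[OF Q] by (simp add: psd_iff_psd_form)
  then have "(\<Sum>j<dA. qform {..<dB * dB} (entries (choi dB Q)) (vec_U j))
      \<le> of_real (real dB) * (\<Sum>k<dB * dB. entries (choi dB Q) k k)"
    using dB vec_U_orthogonal[OF orth] by (intro sum_qform_orthogonal_le_trace) auto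
  then show ?thesis
    by (simp add: entries_def trace_choi[OF Q])
qed

lemma qform_max_ent_diff:
  assumes d: "0 < dA * dB" and Q: "lin_map dB Q"
  shows "qform {..<(dA * dB) * (dA * dB)} (entries (of_real l \<cdot>\<^sub>m
      map_tensor (\<lambda>Y. Y) (map_tensor (repl_id dA) Q dA dB) (dA * dB) (dA * dB) max_ent_AB
      - map_tensor (\<lambda>Y. Y) (ctrl_channel dA dB b U) (dA * dB) (dA * dB) max_ent_AB)) vec_CU
    = of_real l * (of_real (1 / real (dA * dB)) * (\<Sum>j<dA. qform {..<dB * dB} (entries (choi dB Q)) (vec_U j)))
      - of_nat (dA * dB)"
  by (simp only: qform_smult_minus map_tensor_carrier qform_repl_tensor_max_ent[OF Q]
      qform_ctrl_channel_max_ent[OF d])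

lemma Dmax_ctrl_channel_max_ent_ge:
  assumes dA: "0 < dA" and dB: "0 < dB" and Q: "channel dB Q"
    and orth: "\<forall>i<dA. \<forall>j<dA. i \<noteq> j \<longrightarrow> mtrace (adj (U i) * U j) = 0"
  shows "ereal (log 2 ((real dA)\<^sup>2)) \<le> Dmax ((dA * dB) * (dA * dB))
      (map_tensor (\<lambda>Y. Y) (ctrl_channel dA dB b U) (dA * dB) (dA * dB) max_ent_AB)
      (map_tensor (\<lambda>Y. Y) (map_tensor (repl_id dA) Q dA dB) (dA * dB) (dA * dB) max_ent_AB)"
proof (rule Dmax_ge_log)
  let ?d = "dA * dB"
  define S where "S = (\<Sum>j<dA. qform {..<dB * dB} (entries (choi dB Q)) (vec_U j))"
  have "0 \<le> S"
    using psd_choi[OF Q] unfolding S_def by (intro sum_nonneg) (simp add: psd_iff_psd_form psd_form_def)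
  moreover have "S \<le> of_real (real dB * real dB)"
    unfolding S_def by (rule sum_qform_choi_vec_U_le[OF dB Q orth])
  ultimately obtain s where S: "S = of_real s" and s: "0 \<le> s" "s \<le> real dB * real dB"
    by (intro that[of "Re S"]) (auto simp: less_eq_complex_def complex_eq_iff)
  fix l assume "psd (?d * ?d) (of_real l \<cdot>\<^sub>m
    map_tensor (\<lambda>Y. Y) (map_tensor (repl_id dA) Q dA dB) ?d ?d max_ent_AB
    - map_tensor (\<lambda>Y. Y) (ctrl_channel dA dB b U) ?d ?d max_ent_AB)" (is "psd _ ?M")
  then have "0 \<le> qform {..<?d * ?d} (entries ?M) vec_CU"
    by (simp add: psd_iff_psd_form psd_form_def)
  also have "\<dots> = of_real l * (of_real (1 / real ?d) * S) - of_nat ?d"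
    unfolding S_def using dA dB Q by (intro qform_max_ent_diff) (simp_all add: channel_def)
  finally have "0 \<le> of_real l * (of_real (1 / real ?d) * S) - of_nat ?d" .
  then have "real ?d * real ?d \<le> l * s"
    using dA dB by (simp add: S less_eq_complex_def field_simps)
  moreover have "0 < real ?d * real ?d" using dA dB by simp
  ultimately have "0 < l" using s by (smt (verit) mult_nonpos_nonneg)
  then have "real ?d * real ?d \<le> l * (real dB * real dB)"
    using \<open>real ?d * real ?d \<le> l * s\<close> s by (smt (verit) mult_left_mono)
  then show "(real dA)\<^sup>2 \<le> l"
    using dB by (simp add: power2_eq_square field_simps)
qed (use dA in simp)

lemma cond_min_entropy_ctrl_channel_le:
  assumes "0 < dA" "0 < dB" "\<forall>i<dA. \<forall>j<dA. i \<noteq> j \<longrightarrow> mtrace (adj (U i) * U j) = 0"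
  shows "cond_min_entropy dA dB (ctrl_channel dA dB b U) \<le> - ereal (log 2 ((real dA)\<^sup>2))"
  using assms by (intro cond_min_entropy_le[OF density_max_entangled] Dmax_ctrl_channel_max_ent_ge) simp_all

end

theorem proposition14:
  fixes dA dB :: nat and b :: "nat \<Rightarrow> complex vec" and U :: "nat \<Rightarrow> complex mat"
  assumes dA: "1 \<le> dA" and dB: "1 \<le> dB"
    and onb: "\<forall>i < dA. \<forall>j < dA. b i \<in> carrier_vec dA \<and> b i \<bullet>c b j = (if i = j then 1 else 0)"
    and unit: "\<forall>j < dA. unitary dB (U j)"
  shows "cond_min_entropy dA dB (ctrl_channel dA dB b U) \<ge> ereal (- 2 * log 2 (real dA)) \<and>
         ((\<forall>i < dA. \<forall>j < dA. i \<noteq> j \<longrightarrow> mtrace (adj (U i) * U j) = 0) \<longrightarrow>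
          cond_min_entropy dA dB (ctrl_channel dA dB b U) = ereal (- 2 * log 2 (real dA)))"
proof -
  interpret controlled_unitary dA dB b U
    using onb unit by unfold_locales
  have pos: "0 < dA" "0 < dB" using dA dB by simp_all
  have log: "- ereal (log 2 ((real dA)\<^sup>2)) = ereal (- 2 * log 2 (real dA))"
    using pos by (simp add: log_nat_power)
  have "ereal (- 2 * log 2 (real dA)) \<le> cond_min_entropy dA dB (ctrl_channel dA dB b U)"
    using cond_min_entropy_ctrl_channel_ge[OF pos(1)] unfolding log .
  moreover have "cond_min_entropy dA dB (ctrl_channel dA dB b U) \<le> ereal (- 2 * log 2 (real dA))"
    if "\<forall>i < dA. \<forall>j < dA. i \<noteq> j \<longrightarrow> mtrace (adj (U i) * U j) = 0"
    using cond_min_entropy_ctrl_channel_le[OF pos that] unfolding log .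
  ultimately show ?thesis by auto
qed

end
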